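(* Let $\underline p^\infty(q):=\sup_{\sigma\in\Sigma}\inf_{\xi\in\Xi}P_{\rm reach}(Q_{\rm safe},Q_{\rm tgt},\infty\mid q,\sigma,\xi)$, $Q_{\rm reach}:=\{q:\underline p^\infty(q)>0\}$, and $A^*(q):=\arg\max_{a\in A}\min_{\gamma\in\Gamma_{q,a}}\sum_{q'}\gamma(q')\underline p^\infty(q')$. Let $Q^0:=Q_{\rm tgt}$ and for $m\ge1$ $$Q^m:=Q^{m-1}\cup\Big\{q\in Q\setminus Q^{m-1}:\exists a\in A^*(q)\ \text{with}\ \min_{\gamma\in\Gamma_{q,a}}\sum_{q'\in Q^{m-1}}\gamma(q')>0\Big\},$$ and $m_{\max}:=\min\{m\ge1:Q^m=Q^{m-1}\}$. Let $\sigma^*\in\Sigma_s$ be a stationary strategy such that for every $m\in\{1,\dots,m_{\max}\}$ and every $q\in Q^m\setminus Q^{m-1}$, $$\sigma^*(q)\in\Big\{a\in A^*(q):\min_{\gamma\in\Gamma_{q,a}}\sum_{q'\in Q^{m-1}}\gamma(q')>0\Big\},$$ with arbitrary actions at states $q\in Q_{\rm tgt}\cup(Q\setminus Q_{\rm reach})$. Then $\sigma^*$ is proper and optimal: for every $q\in Q$, $\inf_{\xi\in\Xi}P_{\rm reach}(Q_{\rm safe},Q_{\rm tgt},\infty\mid q,\sigma^*,\xi)=\underline p^\infty(q)$, and $\lim_{k\to\infty}\widetilde P^{q,\sigma^*}_\xi[\omega(k)\in Q_{\rm reach}]=0$ for every adversary $\xi$ of $\widetilde{\mathcal M}$.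
   Context: Fix $n\ge1$, $s\ge1$, $\varepsilon\ge0$, a finite mode set $U=\{1,\dots,m\}$, continuous $f_u:\mathbb R^n\to\mathbb R^n$ ($u\in U$), and a Borel probability $\widehat p_v$ on $\mathbb R^n$ with finite $s$-th moment; $T^u_{p_v}(B\mid x):=p_v(\{v:f_u(x)+v\in B\})$. Abstraction. $X\subset\mathbb R^n$ bounded Borel, $X_{\rm tgt}\subset X$; $Q_{\rm safe}$ a finite family of pairwise disjoint Borel sets with union $X$, each either contained in or disjoint from $X_{\rm tgt}$; $Q_{\rm tgt}$ those contained in $X_{\rm tgt}$; $q_u:=\mathbb R^n\setminus X$; $Q:=Q_{\rm safe}\cup\{q_u\}$; $A:=U$. Bounds $\underline P\le\overline P$ in $[0,1]$ on $Q\times A\times Q$ with $\sum_{q'}\underline P(q,a,q')\le1\le\sum_{q'}\overline P(q,a,q')$, $\underline P(q,a,q')\le\inf_{x\in q}T^a_{\widehat p_v}(q'\mid x)$, $\overline P(q,a,q')\ge\sup_{x\in q}T^a_{\widehat p_v}(q'\mid x)$ for $q\in Q_{\rm safe}$, and $\underline P(q_u,a,q_u)=\overline P(q_u,a,q_u)=1$. $\widehat\Gamma_{q,a}:=\{\gamma\in\mathcal D(Q):\underline P(q,a,\cdot)\le\gamma\le\overline P(q,a,\cdot)\}$. With $c(q,q'):=\inf\{\|x-y\|^s:x\in q,y\in q'\}$ and $\mathcal T_c(\gamma,\gamma')$ the minimal $c$-transport cost over couplings of $\gamma,\gamma'\in\mathcal D(Q)$, $\Gamma_{q,a}:=\{\gamma:\exists\widehat\gamma\in\widehat\Gamma_{q,a},\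 \mathcal T_c(\gamma,\widehat\gamma)\le\varepsilon^s\}$ for $q\in Q_{\rm safe}$, and $\Gamma_{q_u,a}:=\widehat\Gamma_{q_u,a}$. This is the robust MDP $\mathcal M=(Q,A,\Gamma)$. Semantics. Strategies $\sigma\in\Sigma$ map finite paths to actions; $\Sigma_s$ are the stationary ones. Adversaries $\xi\in\Xi$ map each finite path $\omega^k$ and action $a$ to a distribution in $\Gamma_{\mathrm{last}(\omega^k),a}$. $P^{q,\sigma}_\xi$ is the path measure with $\omega(0)=q$ and $P[\omega(k+1)=q'\mid\omega^k]=\xi(\omega^k,\sigma(\omega^k))(q')$. $P_{\rm reach}(Q_{\rm safe},Q_{\rm tgt},\infty\mid q,\sigma,\xi):=P^{q,\sigma}_\xi[\exists k\ge0:\omega(k)\in Q_{\rm tgt}\wedge\forall k'<k,\ \omega(k')\in Q_{\rm safe}]$. Modified robust MDP. $\widetilde{\mathcal M}=(Q,A,\widetilde\Gamma)$ with $\widetilde\Gamma_{q,a}:=\{\delta_{q_u}\}$ for $q\in Q_{\rm tgt}$ and $\widetilde\Gamma_{q,a}:=\Gamma_{q,a}$ otherwise. Its adversaries choose distributions from $\widetilde\Gamma$, and $\widetilde P^{q,\sigma}_\xi$ is the corresponding path measure. A stationary strategy is called proper if it satisfies the limit condition stated in the claim for all $q$ and all adversaries of $\widetilde{\mathcal M}$. *)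

theory Defs
  imports "HOL-Probability.Probability"
begin

definition distr :: "'q set \<Rightarrow> ('q \<Rightarrow> real) set" where
  "distr Q = {\<gamma>. (\<forall>x. 0 \<le> \<gamma> x) \<and> (\<forall>x. x \<notin> Q \<longrightarrow> \<gamma> x = 0) \<and> sum \<gamma> Q = 1}"

definition dirac :: "'q \<Rightarrow> 'q \<Rightarrow> real" where
  "dirac q0 = (\<lambda>x. if x = q0 then 1 else 0)"

text \<open>Strategies: maps from finite paths (lists, first entry omega(0)) to actions in A.\<close>
definition strategies :: "'a set \<Rightarrow> ('q list \<Rightarrow> 'a) set" where
  "strategies A = {\<sigma>. \<forall>w. \<sigma> w \<in> A}"

definition stationary :: "('q \<Rightarrow> 'a) \<Rightarrow> ('q list \<Rightarrow> 'a)" where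
  "stationary \<sigma>s = (\<lambda>w. \<sigma>s (last w))"

definition adversaries ::
  "'q set \<Rightarrow> 'a set \<Rightarrow> ('q \<Rightarrow> 'a \<Rightarrow> ('q \<Rightarrow> real) set) \<Rightarrow> ('q list \<Rightarrow> 'a \<Rightarrow> 'q \<Rightarrow> real) set" where
  "adversaries Q A \<Gamma> = {\<xi>. \<forall>w a. w \<noteq> [] \<and> set w \<subseteq> Q \<and> a \<in> A \<longrightarrow> \<xi> w a \<in> \<Gamma> (last w) a}"

definition paths :: "'q set \<Rightarrow> 'q \<Rightarrow> nat \<Rightarrow> 'q list set" where
  "paths Q q k = {w. length w = Suc k \<and> hd w = q \<and> set w \<subseteq> Q}"

text \<open>Probability under the path measure of the cylinder given by a finite path
  (the path measure is determined by these finite-dimensional distributions).\<close>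
definition path_prob :: "('q list \<Rightarrow> 'a) \<Rightarrow> ('q list \<Rightarrow> 'a \<Rightarrow> 'q \<Rightarrow> real) \<Rightarrow> 'q list \<Rightarrow> real" where
  "path_prob \<sigma> \<xi> w = (\<Prod>i\<in>{1..<length w}. \<xi> (take i w) (\<sigma> (take i w)) (w ! i))"

definition reach_within ::
  "'q set \<Rightarrow> 'q set \<Rightarrow> 'q set \<Rightarrow> ('q list \<Rightarrow> 'a) \<Rightarrow> ('q list \<Rightarrow> 'a \<Rightarrow> 'q \<Rightarrow> real) \<Rightarrow> 'q \<Rightarrow> nat \<Rightarrow> real" where
  "reach_within Q Qsafe Qtgt \<sigma> \<xi> q k =
     (\<Sum>w\<in>paths Q q k. if (\<exists>j\<le>k. w ! j \<in> Qtgt \<and> (\<forall>j'<j. w ! j' \<in> Qsafe)) then path_prob \<sigma> \<xi> w else 0)"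

text \<open>Unbounded-horizon reach probability P_reach(Qsafe, Qtgt, infinity | q, sigma, xi),
  obtained by continuity of the path measure from the increasing finite-horizon events.\<close>
definition P_reach ::
  "'q set \<Rightarrow> 'q set \<Rightarrow> 'q set \<Rightarrow> 'q \<Rightarrow> ('q list \<Rightarrow> 'a) \<Rightarrow> ('q list \<Rightarrow> 'a \<Rightarrow> 'q \<Rightarrow> real) \<Rightarrow> real" where
  "P_reach Q Qsafe Qtgt q \<sigma> \<xi> = (SUP k. reach_within Q Qsafe Qtgt \<sigma> \<xi> q k)"

definition prob_at ::
  "'q set \<Rightarrow> ('q list \<Rightarrow> 'a) \<Rightarrow> ('q list \<Rightarrow> 'a \<Rightarrow> 'q \<Rightarrow> real) \<Rightarrow> 'q \<Rightarrow> nat \<Rightarrow> 'q set \<Rightarrow> real" where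
  "prob_at Q \<sigma> \<xi> q k S = (\<Sum>w\<in>paths Q q k. if last w \<in> S then path_prob \<sigma> \<xi> w else 0)"

definition p_low ::
  "'q set \<Rightarrow> 'a set \<Rightarrow> ('q \<Rightarrow> 'a \<Rightarrow> ('q \<Rightarrow> real) set) \<Rightarrow> 'q set \<Rightarrow> 'q set \<Rightarrow> 'q \<Rightarrow> real" where
  "p_low Q A \<Gamma> Qsafe Qtgt q =
     (SUP \<sigma>\<in>strategies A. INF \<xi>\<in>adversaries Q A \<Gamma>. P_reach Q Qsafe Qtgt q \<sigma> \<xi>)"

primrec Qlev :: "'q set \<Rightarrow> ('q \<Rightarrow> 'a \<Rightarrow> ('q \<Rightarrow> real) set) \<Rightarrow> ('q \<Rightarrow> 'a set) \<Rightarrow> 'q set \<Rightarrow> nat \<Rightarrow> 'q set" where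
  "Qlev Q \<Gamma> Ast Q0 0 = Q0"
| "Qlev Q \<Gamma> Ast Q0 (Suc k) = Qlev Q \<Gamma> Ast Q0 k \<union>
     {q \<in> Q - Qlev Q \<Gamma> Ast Q0 k. \<exists>a\<in>Ast q. (INF \<gamma>\<in>\<Gamma> q a. \<Sum>q'\<in>Qlev Q \<Gamma> Ast Q0 k. \<gamma> q') > 0}"

definition opt_actions :: "'q set \<Rightarrow> 'a set \<Rightarrow> ('q \<Rightarrow> 'a \<Rightarrow> ('q \<Rightarrow> real) set) \<Rightarrow> ('q \<Rightarrow> real) \<Rightarrow> 'q \<Rightarrow> 'a set" where
  "opt_actions Q A \<Gamma> p q = {a\<in>A. \<forall>b\<in>A. (INF \<gamma>\<in>\<Gamma> q b. \<Sum>q'\<in>Q. \<gamma> q' * p q')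
                                   \<le> (INF \<gamma>\<in>\<Gamma> q a. \<Sum>q'\<in>Q. \<gamma> q' * p q')}"

definition trans_prob :: "('v::real_normed_vector \<Rightarrow> 'v) \<Rightarrow> 'v measure \<Rightarrow> 'v set \<Rightarrow> 'v \<Rightarrow> real" where
  "trans_prob fu p B x = measure p {v. fu x + v \<in> B}"

definition set_cost :: "real \<Rightarrow> 'v::real_normed_vector set \<Rightarrow> 'v set \<Rightarrow> real" where
  "set_cost s q q' = Inf {norm (x - y) powr s | x y. x \<in> q \<and> y \<in> q'}"

definition couplings :: "'q set \<Rightarrow> ('q \<Rightarrow> real) \<Rightarrow> ('q \<Rightarrow> real) \<Rightarrow> ('q \<Rightarrow> 'q \<Rightarrow> real) set" where
  "couplings Q \<gamma> \<gamma>' = {\<pi>. (\<forall>x y. 0 \<le> \<pi> x y) \<and> (\<forall>x y. (x, y) \<notin> Q \<times> Q \<longrightarrow> \<pi> x y = 0)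
       \<and> (\<forall>x\<in>Q. (\<Sum>y\<in>Q. \<pi> x y) = \<gamma> x) \<and> (\<forall>y\<in>Q. (\<Sum>x\<in>Q. \<pi> x y) = \<gamma>' y)}"

definition transport_cost :: "'q set \<Rightarrow> ('q \<Rightarrow> 'q \<Rightarrow> real) \<Rightarrow> ('q \<Rightarrow> real) \<Rightarrow> ('q \<Rightarrow> real) \<Rightarrow> real" where
  "transport_cost Q c \<gamma> \<gamma>' = Inf {\<Sum>x\<in>Q. \<Sum>y\<in>Q. \<pi> x y * c x y | \<pi>. \<pi> \<in> couplings Q \<gamma> \<gamma>'}"

definition Gamma_hat :: "'q set \<Rightarrow> ('q \<Rightarrow> 'a \<Rightarrow> 'q \<Rightarrow> real) \<Rightarrow> ('q \<Rightarrow> 'a \<Rightarrow> 'q \<Rightarrow> real) \<Rightarrow> 'q \<Rightarrow> 'a \<Rightarrow> ('q \<Rightarrow> real) set" where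
  "Gamma_hat Q Pl Pu q a = {\<gamma> \<in> distr Q. \<forall>q'\<in>Q. Pl q a q' \<le> \<gamma> q' \<and> \<gamma> q' \<le> Pu q a q'}"

definition Gamma_amb :: "'q set \<Rightarrow> 'q set \<Rightarrow> ('q \<Rightarrow> 'q \<Rightarrow> real) \<Rightarrow> real \<Rightarrow> real \<Rightarrow>
     ('q \<Rightarrow> 'a \<Rightarrow> 'q \<Rightarrow> real) \<Rightarrow> ('q \<Rightarrow> 'a \<Rightarrow> 'q \<Rightarrow> real) \<Rightarrow> 'q \<Rightarrow> 'a \<Rightarrow> ('q \<Rightarrow> real) set" where
  "Gamma_amb Q Qsafe c eps s Pl Pu q a =
     (if q \<in> Qsafe then {\<gamma> \<in> distr Q. \<exists>\<gamma>h\<in>Gamma_hat Q Pl Pu q a. transport_cost Q c \<gamma> \<gamma>h \<le> eps powr s}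
      else Gamma_hat Q Pl Pu q a)"

end

theory Submission
  imports Defs
begin

(*
  The optimal value p of the robust reachability problem is the least non-negative
  supersolution of the robust Bellman inequalities that is 1 on the target, and it satisfies
  the Bellman equation, with equality attained by the optimal actions A*.

  States with p > 0 lie in the saturated level set Q^(mmax-1): on the maximizers of p outside
  it, optimal actions put arbitrarily little mass on it, and non-optimal actions are strictly
  worse, so lowering p there by a small amount still gives a supersolution.

  For the stationary strategy of the theorem with value v, suppose max (p - v) = D > 0 and take
  a maximizer q on the least possible level. There the strategy plays an optimal action that
  moves one level down with probability at least beta > 0, where p - v < D; by the Bellman
  equation for p and the supersolution property of v this forces p q - v q < D.

  Properness: in the modified MDP the target leads to the unsafe state, so from the saturated
  level set the unsafe state is reached within mmax steps with probability at least
  beta^(mmax-1). The probability of having been absorbed is increasing and bounded, so the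
  probability of being in the saturated level set at time k tends to 0.
*)

section \<open>Distributions and path probabilities\<close>

lemma distr_nonneg: "\<gamma> \<in> distr Q \<Longrightarrow> 0 \<le> \<gamma> x"
  by (simp add: distr_def)

lemma distr_sum: "\<gamma> \<in> distr Q \<Longrightarrow> sum \<gamma> Q = 1"
  by (simp add: distr_def)

lemma distr_le_1:
  assumes "finite Q" "\<gamma> \<in> distr Q"
  shows "\<gamma> x \<le> 1"
proof (cases "x \<in> Q")
  case True
  have "\<gamma> x \<le> sum \<gamma> Q"
    by (rule member_le_sum) (use True assms distr_nonneg in auto)
  then show ?thesis using distr_sum[OF assms(2)] by simp
next
  case False
  then show ?thesis using assms(2) by (simp add: distr_def)
qed

lemma dirac_in_distr: "finite Q \<Longrightarrow> q \<in> Q \<Longrightarrow> dirac q \<in> distr Q"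
  by (auto simp: distr_def dirac_def)

lemma distr_eq_dirac:
  assumes "finite Q" "q \<in> Q" "\<gamma> \<in> distr Q" "1 \<le> \<gamma> q"
  shows "\<gamma> = dirac q"
proof
  fix x
  have "\<gamma> x = 0" if "x \<in> Q" "x \<noteq> q"
  proof -
    have "\<gamma> x \<le> sum \<gamma> (Q - {q})"
      by (rule member_le_sum) (use that assms distr_nonneg in auto)
    moreover have "sum \<gamma> Q = \<gamma> q + sum \<gamma> (Q - {q})"
      by (rule sum.remove[OF assms(1,2)])
    ultimately show ?thesis using distr_sum[OF assms(3)] distr_nonneg[OF assms(3), of x] assms(4)
      by linarith
  qed
  moreover have "\<gamma> q = 1" using distr_le_1[OF assms(1,3)] assms(4) by (intro antisym)
  ultimately show "\<gamma> x = dirac q x"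
    using assms(3) by (auto simp: dirac_def distr_def)
qed

lemma sum_distr_mono:
  assumes "\<gamma> \<in> distr Q" "\<And>q'. q' \<in> Q \<Longrightarrow> f q' \<le> g q'"
  shows "(\<Sum>q'\<in>Q. \<gamma> q' * f q') \<le> (\<Sum>q'\<in>Q. \<gamma> q' * g q')"
  by (rule sum_mono, rule mult_left_mono) (use assms distr_nonneg in auto)

lemma sum_distr_add_const:
  assumes "\<gamma> \<in> distr Q"
  shows "(\<Sum>q'\<in>Q. \<gamma> q' * (f q' + c)) = (\<Sum>q'\<in>Q. \<gamma> q' * f q') + c"
  using distr_sum[OF assms] by (simp add: distrib_left sum.distrib flip: sum_distrib_right)

lemma sum_distr_abs_le:
  assumes "finite Q" "\<gamma> \<in> distr Q"
  shows "\<bar>\<Sum>q'\<in>Q. \<gamma> q' * f q'\<bar> \<le> (\<Sum>q'\<in>Q. \<bar>f q'\<bar>)"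
proof -
  have "\<bar>\<gamma> x * f x\<bar> \<le> \<bar>f x\<bar>" for x
    using distr_nonneg[OF assms(2), of x] distr_le_1[OF assms, of x]
    by (simp add: abs_mult mult_left_le_one_le)
  then have "(\<Sum>q'\<in>Q. \<bar>\<gamma> q' * f q'\<bar>) \<le> (\<Sum>q'\<in>Q. \<bar>f q'\<bar>)" by (rule sum_mono)
  then show ?thesis using sum_abs[of "\<lambda>q'. \<gamma> q' * f q'" Q] by linarith
qed

text \<open>A strategy and an adversary enter path probabilities only through the history-dependent
  kernel \<open>w \<mapsto> \<xi> w (\<sigma> w)\<close>; on kernels, conditioning on the first step is just \<open>kshift\<close>.\<close>

definition kernel_on :: "'q set \<Rightarrow> ('q list \<Rightarrow> 'q \<Rightarrow> real) \<Rightarrow> bool" where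
  "kernel_on Q K \<longleftrightarrow> (\<forall>w. w \<noteq> [] \<longrightarrow> set w \<subseteq> Q \<longrightarrow> K w \<in> distr Q)"

definition kpath_prob :: "('q list \<Rightarrow> 'q \<Rightarrow> real) \<Rightarrow> 'q list \<Rightarrow> real" where
  "kpath_prob K w = (\<Prod>i\<in>{1..<length w}. K (take i w) (w ! i))"

definition kshift :: "'q \<Rightarrow> ('q list \<Rightarrow> 'q \<Rightarrow> real) \<Rightarrow> 'q list \<Rightarrow> 'q \<Rightarrow> real" where
  "kshift q K = (\<lambda>w. K (q # w))"

definition kevent_prob :: "'q set \<Rightarrow> ('q list \<Rightarrow> 'q \<Rightarrow> real) \<Rightarrow> 'q \<Rightarrow> nat \<Rightarrow> ('q list \<Rightarrow> bool) \<Rightarrow> real" where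
  "kevent_prob Q K q k P = (\<Sum>w\<in>paths Q q k. if P w then kpath_prob K w else 0)"

definition policy_kernel :: "('q list \<Rightarrow> 'a) \<Rightarrow> ('q list \<Rightarrow> 'a \<Rightarrow> 'q \<Rightarrow> real) \<Rightarrow> 'q list \<Rightarrow> 'q \<Rightarrow> real" where
  "policy_kernel \<sigma> \<xi> = (\<lambda>w. \<xi> w (\<sigma> w))"

definition reach_event :: "'q set \<Rightarrow> 'q set \<Rightarrow> nat \<Rightarrow> 'q list \<Rightarrow> bool" where
  "reach_event Qs T k w \<longleftrightarrow> (\<exists>j\<le>k. w ! j \<in> T \<and> (\<forall>j'<j. w ! j' \<in> Qs))"

lemma reach_within_eq_kevent_prob:
  "reach_within Q Qs T \<sigma> \<xi> q k = kevent_prob Q (policy_kernel \<sigma> \<xi>) q k (reach_event Qs T k)"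
  unfolding reach_within_def kevent_prob_def reach_event_def path_prob_def kpath_prob_def
    policy_kernel_def ..

lemma prob_at_eq_kevent_prob:
  "prob_at Q \<sigma> \<xi> q k S = kevent_prob Q (policy_kernel \<sigma> \<xi>) q k (\<lambda>w. last w \<in> S)"
  unfolding prob_at_def kevent_prob_def path_prob_def kpath_prob_def policy_kernel_def ..

lemma kernel_on_kshift: "kernel_on Q K \<Longrightarrow> q \<in> Q \<Longrightarrow> kernel_on Q (kshift q K)"
  by (auto simp: kernel_on_def kshift_def)

lemma kernel_on_distr: "kernel_on Q K \<Longrightarrow> q \<in> Q \<Longrightarrow> K [q] \<in> distr Q"
  by (simp add: kernel_on_def)

lemma kernel_on_policy_kernel:
  assumes "\<xi> \<in> adversaries Q A G" "\<And>q a. q \<in> Q \<Longrightarrow> a \<in> A \<Longrightarrow> G q a \<subseteq> distr Q"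
    and "\<And>w. w \<noteq> [] \<Longrightarrow> set w \<subseteq> Q \<Longrightarrow> \<sigma> w \<in> A"
  shows "kernel_on Q (policy_kernel \<sigma> \<xi>)"
  unfolding kernel_on_def policy_kernel_def
proof (intro allI impI)
  fix w assume w: "w \<noteq> []" "set w \<subseteq> Q"
  then have "last w \<in> Q" using last_in_set by blast
  moreover have "\<xi> w (\<sigma> w) \<in> G (last w) (\<sigma> w)" using assms(1,3) w by (auto simp: adversaries_def)
  ultimately show "\<xi> w (\<sigma> w) \<in> distr Q" using assms(2) assms(3)[OF w] by blast
qed

lemma paths_0: "paths Q q 0 = (if q \<in> Q then {[q]} else {})"
  by (auto simp: paths_def length_Suc_conv)

lemma finite_paths: "finite Q \<Longrightarrow> finite (paths Q q k)"
  by (rule finite_subset[OF _ finite_lists_length_eq[of Q "Suc k"]]) (auto simp: paths_def)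

lemma paths_nth_0: "w \<in> paths Q q k \<Longrightarrow> w ! 0 = q"
  by (cases w) (auto simp: paths_def)

lemma paths_Suc: "q \<in> Q \<Longrightarrow> paths Q q (Suc k) = (\<lambda>v. q # v) ` (\<Union>q'\<in>Q. paths Q q' k)"
proof (rule set_eqI, rule iffI)
  fix w assume w: "w \<in> paths Q q (Suc k)"
  then obtain v where v: "w = q # v" by (cases w) (auto simp: paths_def)
  with w have "length v = Suc k" "set v \<subseteq> Q" by (auto simp: paths_def)
  moreover have "v \<noteq> []" using \<open>length v = Suc k\<close> by auto
  ultimately have "hd v \<in> Q" "v \<in> paths Q (hd v) k"
    using hd_in_set[of v] by (auto simp: paths_def)
  then show "w \<in> (\<lambda>v. q # v) ` (\<Union>q'\<in>Q. paths Q q' k)" using v by blast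
qed (auto simp: paths_def)

lemma sum_paths_Suc:
  assumes "finite Q" "q \<in> Q"
  shows "(\<Sum>w\<in>paths Q q (Suc k). F w) = (\<Sum>q'\<in>Q. \<Sum>v\<in>paths Q q' k. F (q # v))"
proof -
  have "(\<Sum>w\<in>paths Q q (Suc k). F w) = (\<Sum>v\<in>(\<Union>q'\<in>Q. paths Q q' k). F (q # v))"
    unfolding paths_Suc[OF assms(2)] by (subst sum.reindex) (auto simp: inj_on_def)
  also have "\<dots> = (\<Sum>q'\<in>Q. \<Sum>v\<in>paths Q q' k. F (q # v))"
    by (rule sum.UNION_disjoint) (auto simp: finite_paths[OF assms(1)] assms(1), auto simp: paths_def)
  finally show ?thesis .
qed

lemma kpath_prob_Cons:
  assumes "v \<noteq> []"
  shows "kpath_prob K (q # v) = K [q] (hd v) * kpath_prob (kshift q K) v"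
proof -
  have "kpath_prob K (q # v)
      = K (take 1 (q # v)) ((q # v) ! 1) * (\<Prod>i\<in>{Suc 1..<Suc (length v)}. K (take i (q # v)) ((q # v) ! i))"
    unfolding kpath_prob_def using assms by (subst prod.atLeast_Suc_lessThan) auto
  also have "(\<Prod>i\<in>{Suc 1..<Suc (length v)}. K (take i (q # v)) ((q # v) ! i))
      = kpath_prob (kshift q K) v"
    unfolding prod.shift_bounds_Suc_ivl by (simp add: kpath_prob_def kshift_def)
  finally show ?thesis using assms by (simp add: hd_conv_nth)
qed

lemma kpath_prob_nonneg:
  assumes "kernel_on Q K" "set w \<subseteq> Q"
  shows "0 \<le> kpath_prob K w"
  unfolding kpath_prob_def
proof (rule prod_nonneg)
  fix i assume "i \<in> {1..<length w}"
  then have "take i w \<noteq> []" by auto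
  moreover have "set (take i w) \<subseteq> Q" using assms(2) set_take_subset by (metis order_trans)
  ultimately show "0 \<le> K (take i w) (w ! i)"
    using assms(1) by (auto simp: kernel_on_def distr_def)
qed

lemma kevent_prob_0: "q \<in> Q \<Longrightarrow> kevent_prob Q K q 0 P = (if P [q] then 1 else 0)"
  by (simp add: kevent_prob_def paths_0 kpath_prob_def)

lemma kevent_prob_Suc:
  assumes "finite Q" "q \<in> Q"
  shows "kevent_prob Q K q (Suc k) P
    = (\<Sum>q'\<in>Q. K [q] q' * kevent_prob Q (kshift q K) q' k (\<lambda>v. P (q # v)))"
  unfolding kevent_prob_def sum_paths_Suc[OF assms] sum_distrib_left
proof (intro sum.cong refl)
  fix q' v assume "v \<in> paths Q q' k"
  then have "v \<noteq> []" "hd v = q'" by (auto simp: paths_def)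
  then show "(if P (q # v) then kpath_prob K (q # v) else 0)
      = K [q] q' * (if P (q # v) then kpath_prob (kshift q K) v else 0)"
    by (simp add: kpath_prob_Cons)
qed

lemma kevent_prob_nonneg:
  assumes "kernel_on Q K"
  shows "0 \<le> kevent_prob Q K q k P"
  unfolding kevent_prob_def
  by (rule sum_nonneg) (use kpath_prob_nonneg[OF assms] in \<open>auto simp: paths_def\<close>)

lemma kevent_prob_mono:
  assumes "kernel_on Q K" "\<And>w. w \<in> paths Q q k \<Longrightarrow> P w \<Longrightarrow> P' w"
  shows "kevent_prob Q K q k P \<le> kevent_prob Q K q k P'"
  unfolding kevent_prob_def
  by (rule sum_mono) (use assms kpath_prob_nonneg[OF assms(1)] in \<open>auto simp: paths_def\<close>)

lemma kevent_prob_True: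
  assumes "finite Q" "kernel_on Q K" "q \<in> Q"
  shows "kevent_prob Q K q k (\<lambda>_. True) = 1"
  using assms(2,3)
proof (induction k arbitrary: K q)
  case 0
  then show ?case by (simp add: kevent_prob_0)
next
  case (Suc k)
  then show ?case
    using distr_sum[OF kernel_on_distr[OF Suc.prems]] kernel_on_kshift[OF Suc.prems(1)]
    by (simp add: kevent_prob_Suc[OF assms(1)])
qed

lemma kevent_prob_le_1:
  assumes "finite Q" "kernel_on Q K" "q \<in> Q"
  shows "kevent_prob Q K q k P \<le> 1"
  using kevent_prob_mono[OF assms(2), of q k P "\<lambda>_. True"] kevent_prob_True[OF assms] by simp

lemma kevent_prob_certain:
  assumes "finite Q" "kernel_on Q K" "q \<in> Q" "\<And>w. w \<in> paths Q q k \<Longrightarrow> P w"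
  shows "kevent_prob Q K q k P = 1"
proof -
  have "kevent_prob Q K q k P = kevent_prob Q K q k (\<lambda>_. True)"
    unfolding kevent_prob_def using assms(4) by (intro sum.cong) auto
  then show ?thesis using kevent_prob_True[OF assms(1-3)] by simp
qed

lemma kevent_prob_impossible:
  "(\<And>w. w \<in> paths Q q k \<Longrightarrow> \<not> P w) \<Longrightarrow> kevent_prob Q K q k P = 0"
  unfolding kevent_prob_def by (intro sum.neutral) auto

lemma kpath_prob_cong:
  assumes "\<And>u. u \<noteq> [] \<Longrightarrow> set u \<subseteq> Q \<Longrightarrow> hd u = q \<Longrightarrow> K u = K' u" "w \<in> paths Q q k"
  shows "kpath_prob K w = kpath_prob K' w"
  unfolding kpath_prob_def
proof (rule prod.cong[OF refl])
  fix i assume i: "i \<in> {1..<length w}"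
  have "take i w \<noteq> []" "set (take i w) \<subseteq> Q" "hd (take i w) = q"
    using i assms(2) set_take_subset[of i w] by (auto simp: paths_def)
  then show "K (take i w) (w ! i) = K' (take i w) (w ! i)" by (simp add: assms(1))
qed

lemma kevent_prob_cong:
  assumes "\<And>u. u \<noteq> [] \<Longrightarrow> set u \<subseteq> Q \<Longrightarrow> hd u = q \<Longrightarrow> K u = K' u"
  shows "kevent_prob Q K q k P = kevent_prob Q K' q k P"
  unfolding kevent_prob_def using kpath_prob_cong[OF assms] by (intro sum.cong) auto

lemma reach_event_start_target: "w ! 0 \<in> T \<Longrightarrow> reach_event Qs T k w"
  unfolding reach_event_def by blast

lemma reach_event_start_unsafe:
  assumes "T \<subseteq> Qs" "w ! 0 \<notin> Qs"
  shows "\<not> reach_event Qs T k w"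
  unfolding reach_event_def
proof clarify
  fix j assume "w ! j \<in> T" "\<forall>j'<j. w ! j' \<in> Qs"
  then show False using assms by (cases j) auto
qed

lemma reach_event_0: "reach_event Qs T 0 w \<longleftrightarrow> w ! 0 \<in> T"
  by (simp add: reach_event_def)

lemma reach_event_Cons:
  assumes "q \<in> Qs" "q \<notin> T"
  shows "reach_event Qs T (Suc k) (q # v) \<longleftrightarrow> reach_event Qs T k v"
proof
  assume "reach_event Qs T (Suc k) (q # v)"
  then obtain j where j: "j \<le> Suc k" "(q # v) ! j \<in> T" "\<forall>j'<j. (q # v) ! j' \<in> Qs"
    by (auto simp: reach_event_def)
  then obtain i where "j = Suc i" using assms by (cases j) auto
  with j show "reach_event Qs T k v"
    unfolding reach_event_def by (intro exI[of _ i]) auto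
next
  assume "reach_event Qs T k v"
  then obtain i where i: "i \<le> k" "v ! i \<in> T" "\<forall>j'<i. v ! j' \<in> Qs"
    by (auto simp: reach_event_def)
  then have "\<forall>j'<Suc i. (q # v) ! j' \<in> Qs" using assms by (auto simp: less_Suc_eq_0_disj)
  with i show "reach_event Qs T (Suc k) (q # v)"
    unfolding reach_event_def by (intro exI[of _ "Suc i"]) auto
qed

lemma kevent_prob_last_Suc:
  assumes "finite Q" "q \<in> Q"
  shows "kevent_prob Q K q (Suc k) (\<lambda>w. last w \<in> S)
    = (\<Sum>q'\<in>Q. K [q] q' * kevent_prob Q (kshift q K) q' k (\<lambda>w. last w \<in> S))"
proof -
  have "kevent_prob Q K' q' k (\<lambda>v. last (q # v) \<in> S) = kevent_prob Q K' q' k (\<lambda>v. last v \<in> S)"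
    for K' q'
    unfolding kevent_prob_def by (intro sum.cong) (auto simp: paths_def)
  then show ?thesis by (simp add: kevent_prob_Suc[OF assms])
qed

lemma finite_pos_lower_bound:
  fixes f :: "'b \<Rightarrow> real"
  assumes "finite X" "\<And>x. x \<in> X \<Longrightarrow> 0 < f x"
  shows "\<exists>\<delta>>0. \<forall>x\<in>X. \<delta> \<le> f x"
proof (cases "X = {}")
  case False
  then show ?thesis using assms by (intro exI[of _ "Min (f ` X)"]) auto
qed (auto intro: exI[of _ 1])

lemma adversaries_shift:
  assumes "\<xi> \<in> adversaries Q A G" "q \<in> Q"
  shows "(\<lambda>w. \<xi> (q # w)) \<in> adversaries Q A G"
  unfolding adversaries_def
proof (intro CollectI allI impI)
  fix w a assume w: "w \<noteq> [] \<and> set w \<subseteq> Q \<and> a \<in> A"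
  then have "q # w \<noteq> [] \<and> set (q # w) \<subseteq> Q \<and> a \<in> A" using assms(2) by simp
  then have "\<xi> (q # w) a \<in> G (last (q # w)) a" using assms(1) unfolding adversaries_def by blast
  then show "\<xi> (q # w) a \<in> G (last w) a" using w by simp
qed

lemma strategies_shift: "\<sigma> \<in> strategies A \<Longrightarrow> (\<lambda>w. \<sigma> (q # w)) \<in> strategies A"
  by (auto simp: strategies_def)

section \<open>Robust MDPs\<close>

locale robust_mdp =
  fixes Q :: "'q set" and A :: "'a set" and \<Gamma> :: "'q \<Rightarrow> 'a \<Rightarrow> ('q \<Rightarrow> real) set"
    and Qs T :: "'q set" and qu :: 'q
  assumes finite_Q: "finite Q" and qu_in_Q: "qu \<in> Q" and qu_unsafe: "qu \<notin> Qs"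
    and Qs_subset: "Qs \<subseteq> Q" and T_subset: "T \<subseteq> Qs"
    and finite_A: "finite A" and A_nonempty: "A \<noteq> {}"
    and \<Gamma>_nonempty: "\<And>q a. q \<in> Q \<Longrightarrow> a \<in> A \<Longrightarrow> \<Gamma> q a \<noteq> {}"
    and \<Gamma>_distr: "\<And>q a. q \<in> Q \<Longrightarrow> a \<in> A \<Longrightarrow> \<Gamma> q a \<subseteq> distr Q"
    and \<Gamma>_unsafe: "\<And>a. a \<in> A \<Longrightarrow> \<Gamma> qu a = {dirac qu}"
begin

abbreviation "Adv \<equiv> adversaries Q A \<Gamma>"
abbreviation "p_opt \<equiv> p_low Q A \<Gamma> Qs T"
abbreviation "Ast \<equiv> opt_actions Q A \<Gamma> p_opt"
abbreviation "Qm \<equiv> Qlev Q \<Gamma> Ast T"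
abbreviation "mmax \<equiv> LEAST k. k \<ge> 1 \<and> Qm k = Qm (k - 1)"

definition kreach :: "('q list \<Rightarrow> 'q \<Rightarrow> real) \<Rightarrow> 'q \<Rightarrow> real" where
  "kreach K q = (SUP k. kevent_prob Q K q k (reach_event Qs T k))"

definition strategy_value :: "('q list \<Rightarrow> 'a) \<Rightarrow> 'q \<Rightarrow> real" where
  "strategy_value \<sigma> q = (INF \<xi>\<in>Adv. kreach (policy_kernel \<sigma> \<xi>) q)"

definition bellman :: "'q \<Rightarrow> 'a \<Rightarrow> ('q \<Rightarrow> real) \<Rightarrow> real" where
  "bellman q a f = (INF \<gamma>\<in>\<Gamma> q a. \<Sum>q'\<in>Q. \<gamma> q' * f q')"

lemma P_reach_eq_kreach: "P_reach Q Qs T q \<sigma> \<xi> = kreach (policy_kernel \<sigma> \<xi>) q"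
  by (simp add: P_reach_def kreach_def reach_within_eq_kevent_prob)

lemma p_opt_eq_SUP: "p_opt q = (SUP \<sigma>\<in>strategies A. strategy_value \<sigma> q)"
  by (simp add: p_low_def strategy_value_def P_reach_eq_kreach)

lemma T_subset_Q: "T \<subseteq> Q"
  using T_subset Qs_subset by blast

lemma kernel_on_Adv: "\<sigma> \<in> strategies A \<Longrightarrow> \<xi> \<in> Adv \<Longrightarrow> kernel_on Q (policy_kernel \<sigma> \<xi>)"
  by (rule kernel_on_policy_kernel[OF _ \<Gamma>_distr]) (auto simp: strategies_def)

definition default_adv :: "'q list \<Rightarrow> 'a \<Rightarrow> 'q \<Rightarrow> real" where
  "default_adv w a = (SOME \<gamma>. \<gamma> \<in> \<Gamma> (last w) a)"

lemma default_adv_in: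
  assumes "w \<noteq> []" "set w \<subseteq> Q" "a \<in> A"
  shows "default_adv w a \<in> \<Gamma> (last w) a"
proof -
  have "last w \<in> Q" using assms(1,2) last_in_set by blast
  then have "\<exists>\<gamma>. \<gamma> \<in> \<Gamma> (last w) a" using \<Gamma>_nonempty assms(3) by blast
  then show ?thesis unfolding default_adv_def by (rule someI_ex)
qed

lemma default_adv_Adv: "default_adv \<in> Adv"
  unfolding adversaries_def using default_adv_in by blast

lemma Adv_nonempty: "Adv \<noteq> {}"
  using default_adv_Adv by blast

lemma strategies_nonempty: "(strategies A :: ('q list \<Rightarrow> 'a) set) \<noteq> {}"
  using A_nonempty by (auto simp: strategies_def)

lemma kreach_within_target:
  "kernel_on Q K \<Longrightarrow> q \<in> T \<Longrightarrow> kevent_prob Q K q k (reach_event Qs T k) = 1"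
  using T_subset_Q
  by (intro kevent_prob_certain[OF finite_Q]) (auto simp: paths_nth_0 reach_event_start_target)

lemma kreach_within_unsafe: "q \<notin> Qs \<Longrightarrow> kevent_prob Q K q k (reach_event Qs T k) = 0"
  by (intro kevent_prob_impossible) (simp add: paths_nth_0 reach_event_start_unsafe[OF T_subset])

lemma kreach_within_Suc:
  assumes "q \<in> Qs" "q \<notin> T"
  shows "kevent_prob Q K q (Suc k) (reach_event Qs T (Suc k))
    = (\<Sum>q'\<in>Q. K [q] q' * kevent_prob Q (kshift q K) q' k (reach_event Qs T k))"
  using assms Qs_subset
  by (simp add: kevent_prob_Suc[OF finite_Q] reach_event_Cons[OF assms] subset_iff)

lemma kreach_within_mono:
  assumes "kernel_on Q K" "q \<in> Q"
  shows "kevent_prob Q K q k (reach_event Qs T k)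
    \<le> kevent_prob Q K q (Suc k) (reach_event Qs T (Suc k))"
  using assms
proof (induction k arbitrary: K q)
  case 0
  then show ?case
    using kreach_within_target[OF 0(1)] kevent_prob_nonneg[OF 0(1)]
    by (cases "q \<in> T") (simp_all add: kevent_prob_0 reach_event_0)
next
  case (Suc k)
  consider "q \<in> T" | "q \<notin> Qs" | "q \<in> Qs" "q \<notin> T" by blast
  then show ?case
  proof cases
    case 3
    have "\<And>q'. q' \<in> Q \<Longrightarrow> kevent_prob Q (kshift q K) q' k (reach_event Qs T k)
        \<le> kevent_prob Q (kshift q K) q' (Suc k) (reach_event Qs T (Suc k))"
      using Suc.IH[OF kernel_on_kshift[OF Suc.prems]] .
    then show ?thesis
      unfolding kreach_within_Suc[OF 3]
      by (rule sum_distr_mono[OF kernel_on_distr[OF Suc.prems]])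
  qed (simp_all add: kreach_within_target[OF Suc.prems(1)] kreach_within_unsafe)
qed

lemma kreach_LIMSEQ:
  assumes "kernel_on Q K" "q \<in> Q"
  shows "(\<lambda>k. kevent_prob Q K q k (reach_event Qs T k)) \<longlonglongrightarrow> kreach K q"
  unfolding kreach_def
proof (rule LIMSEQ_incseq_SUP)
  show "bdd_above (range (\<lambda>k. kevent_prob Q K q k (reach_event Qs T k)))"
    using kevent_prob_le_1[OF finite_Q assms] by (intro bdd_aboveI[where M=1]) auto
  show "incseq (\<lambda>k. kevent_prob Q K q k (reach_event Qs T k))"
    by (rule incseq_SucI) (rule kreach_within_mono[OF assms])
qed

lemma kreach_nonneg:
  assumes "kernel_on Q K" "q \<in> Q"
  shows "0 \<le> kreach K q"
  by (rule LIMSEQ_le_const[OF kreach_LIMSEQ[OF assms]]) (simp add: kevent_prob_nonneg[OF assms(1)])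

lemma kreach_le_1:
  assumes "kernel_on Q K" "q \<in> Q"
  shows "kreach K q \<le> 1"
  by (rule LIMSEQ_le_const2[OF kreach_LIMSEQ[OF assms]])
    (simp add: kevent_prob_le_1[OF finite_Q assms])

lemma kreach_target: "kernel_on Q K \<Longrightarrow> q \<in> T \<Longrightarrow> kreach K q = 1"
  by (simp add: kreach_def kreach_within_target)

lemma kreach_unsafe: "q \<notin> Qs \<Longrightarrow> kreach K q = 0"
  by (simp add: kreach_def kreach_within_unsafe)

lemma kreach_first_step:
  assumes "kernel_on Q K" "q \<in> Qs" "q \<notin> T"
  shows "kreach K q = (\<Sum>q'\<in>Q. K [q] q' * kreach (kshift q K) q')"
proof (rule LIMSEQ_unique)
  have qQ: "q \<in> Q" using assms(2) Qs_subset by blast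
  show "(\<lambda>k. \<Sum>q'\<in>Q. K [q] q' * kevent_prob Q (kshift q K) q' k (reach_event Qs T k))
      \<longlonglongrightarrow> kreach K q"
    using LIMSEQ_Suc[OF kreach_LIMSEQ[OF assms(1) qQ]] by (simp add: kreach_within_Suc[OF assms(2,3)])
  show "(\<lambda>k. \<Sum>q'\<in>Q. K [q] q' * kevent_prob Q (kshift q K) q' k (reach_event Qs T k))
      \<longlonglongrightarrow> (\<Sum>q'\<in>Q. K [q] q' * kreach (kshift q K) q')"
    by (intro tendsto_sum tendsto_mult_left kreach_LIMSEQ kernel_on_kshift[OF assms(1) qQ])
qed

lemma kreach_cong:
  "(\<And>u. u \<noteq> [] \<Longrightarrow> set u \<subseteq> Q \<Longrightarrow> hd u = q \<Longrightarrow> K u = K' u) \<Longrightarrow> kreach K q = kreach K' q"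
  unfolding kreach_def by (simp add: kevent_prob_cong[where K=K and K'=K'])

lemma strategy_value_bdd:
  "\<sigma> \<in> strategies A \<Longrightarrow> q \<in> Q \<Longrightarrow> bdd_below ((\<lambda>\<xi>. kreach (policy_kernel \<sigma> \<xi>) q) ` Adv)"
  by (rule bdd_belowI[where m=0]) (auto intro: kreach_nonneg kernel_on_Adv)

lemma strategy_value_le:
  "\<sigma> \<in> strategies A \<Longrightarrow> q \<in> Q \<Longrightarrow> \<xi> \<in> Adv \<Longrightarrow> strategy_value \<sigma> q \<le> kreach (policy_kernel \<sigma> \<xi>) q"
  unfolding strategy_value_def by (rule cINF_lower[OF strategy_value_bdd])

lemma strategy_value_less:
  assumes "\<sigma> \<in> strategies A" "q \<in> Q" "e > 0"
  shows "\<exists>\<xi>\<in>Adv. kreach (policy_kernel \<sigma> \<xi>) q < strategy_value \<sigma> q + e"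
proof -
  have "(INF \<xi>\<in>Adv. kreach (policy_kernel \<sigma> \<xi>) q) < strategy_value \<sigma> q + e"
    using assms(3) by (simp add: strategy_value_def)
  then show ?thesis using cINF_less_iff[OF Adv_nonempty strategy_value_bdd[OF assms(1,2)]] by blast
qed

lemma strategy_value_le_1: "\<sigma> \<in> strategies A \<Longrightarrow> q \<in> Q \<Longrightarrow> strategy_value \<sigma> q \<le> 1"
  using strategy_value_le[OF _ _ default_adv_Adv] kreach_le_1[OF kernel_on_Adv[OF _ default_adv_Adv]]
  by (meson order_trans)

lemma strategy_value_nonneg: "\<sigma> \<in> strategies A \<Longrightarrow> q \<in> Q \<Longrightarrow> 0 \<le> strategy_value \<sigma> q"
  unfolding strategy_value_def
  by (rule cINF_greatest[OF Adv_nonempty]) (rule kreach_nonneg[OF kernel_on_Adv])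

lemma strategy_value_target: "\<sigma> \<in> strategies A \<Longrightarrow> q \<in> T \<Longrightarrow> strategy_value \<sigma> q = 1"
  using Adv_nonempty by (simp add: strategy_value_def kreach_target kernel_on_Adv)

lemma p_opt_bdd: "q \<in> Q \<Longrightarrow> bdd_above ((\<lambda>\<sigma>. strategy_value \<sigma> q) ` strategies A)"
  by (rule bdd_aboveI[where M=1]) (auto intro: strategy_value_le_1)

lemma strategy_value_le_p_opt: "\<sigma> \<in> strategies A \<Longrightarrow> q \<in> Q \<Longrightarrow> strategy_value \<sigma> q \<le> p_opt q"
  unfolding p_opt_eq_SUP by (rule cSUP_upper[OF _ p_opt_bdd])

lemma p_opt_less:
  assumes "q \<in> Q" "e > 0"
  shows "\<exists>\<sigma>\<in>strategies A. p_opt q - e < strategy_value \<sigma> q"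
proof -
  have "p_opt q - e < (SUP \<sigma>\<in>strategies A. strategy_value \<sigma> q)"
    using assms(2) by (simp add: p_opt_eq_SUP)
  then show ?thesis using less_cSUP_iff[OF strategies_nonempty p_opt_bdd[OF assms(1)]] by blast
qed

lemma p_opt_le_1: "q \<in> Q \<Longrightarrow> p_opt q \<le> 1"
  unfolding p_opt_eq_SUP by (rule cSUP_least[OF strategies_nonempty]) (rule strategy_value_le_1)

lemma p_opt_nonneg: "q \<in> Q \<Longrightarrow> 0 \<le> p_opt q"
proof -
  assume q: "q \<in> Q"
  obtain \<sigma> :: "'q list \<Rightarrow> 'a" where \<sigma>: "\<sigma> \<in> strategies A"
    using strategies_nonempty by blast
  then show ?thesis using strategy_value_nonneg[OF \<sigma> q] strategy_value_le_p_opt[OF \<sigma> q] by linarith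
qed

lemma p_opt_target: "q \<in> T \<Longrightarrow> p_opt q = 1"
  using strategies_nonempty by (simp add: p_opt_eq_SUP strategy_value_target)

lemma p_opt_unsafe: "q \<notin> Qs \<Longrightarrow> p_opt q = 0"
  using strategies_nonempty Adv_nonempty
  by (simp add: p_opt_eq_SUP strategy_value_def kreach_unsafe)

lemma bellman_bdd:
  assumes "q \<in> Q" "a \<in> A"
  shows "bdd_below ((\<lambda>\<gamma>. \<Sum>q'\<in>Q. \<gamma> q' * f q') ` \<Gamma> q a)"
proof (rule bdd_belowI)
  fix x assume "x \<in> (\<lambda>\<gamma>. \<Sum>q'\<in>Q. \<gamma> q' * f q') ` \<Gamma> q a"
  then obtain \<gamma> where "\<gamma> \<in> distr Q" "x = (\<Sum>q'\<in>Q. \<gamma> q' * f q')"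
    using \<Gamma>_distr[OF assms] by blast
  then show "- (\<Sum>q'\<in>Q. \<bar>f q'\<bar>) \<le> x" using sum_distr_abs_le[OF finite_Q, of \<gamma> f] by linarith
qed

lemma bellman_le: "q \<in> Q \<Longrightarrow> a \<in> A \<Longrightarrow> \<gamma> \<in> \<Gamma> q a \<Longrightarrow> bellman q a f \<le> (\<Sum>q'\<in>Q. \<gamma> q' * f q')"
  unfolding bellman_def by (rule cINF_lower[OF bellman_bdd])

lemma bellman_less:
  "q \<in> Q \<Longrightarrow> a \<in> A \<Longrightarrow> bellman q a f < c \<Longrightarrow> \<exists>\<gamma>\<in>\<Gamma> q a. (\<Sum>q'\<in>Q. \<gamma> q' * f q') < c"
  unfolding bellman_def using cINF_less_iff[OF \<Gamma>_nonempty bellman_bdd] by blast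

lemma bellman_greatest:
  "q \<in> Q \<Longrightarrow> a \<in> A \<Longrightarrow> (\<And>\<gamma>. \<gamma> \<in> \<Gamma> q a \<Longrightarrow> c \<le> (\<Sum>q'\<in>Q. \<gamma> q' * f q')) \<Longrightarrow> c \<le> bellman q a f"
  unfolding bellman_def by (rule cINF_greatest[OF \<Gamma>_nonempty])

lemma bellman_mono:
  assumes "q \<in> Q" "a \<in> A" "\<And>q'. q' \<in> Q \<Longrightarrow> f q' \<le> g q'"
  shows "bellman q a f \<le> bellman q a g"
proof (rule bellman_greatest[OF assms(1,2)])
  fix \<gamma> assume \<gamma>: "\<gamma> \<in> \<Gamma> q a"
  then have "bellman q a f \<le> (\<Sum>q'\<in>Q. \<gamma> q' * f q')" by (rule bellman_le[OF assms(1,2)])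
  also have "\<dots> \<le> (\<Sum>q'\<in>Q. \<gamma> q' * g q')"
    by (rule sum_distr_mono[OF _ assms(3)]) (use \<Gamma>_distr assms \<gamma> in blast)
  finally show "bellman q a f \<le> (\<Sum>q'\<in>Q. \<gamma> q' * g q')" .
qed

lemma Ast_iff: "a \<in> Ast q \<longleftrightarrow> a \<in> A \<and> (\<forall>b\<in>A. bellman q b p_opt \<le> bellman q a p_opt)"
  by (simp add: opt_actions_def bellman_def)

lemma Ast_nonempty: "\<exists>a. a \<in> Ast q"
proof -
  have fin: "finite ((\<lambda>b. bellman q b p_opt) ` A)" using finite_A by simp
  obtain a where a: "a \<in> A" "bellman q a p_opt = Max ((\<lambda>b. bellman q b p_opt) ` A)"
    using Max_in[OF fin] A_nonempty by (metis (no_types, lifting) image_iff image_is_empty)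
  then have "\<forall>b\<in>A. bellman q b p_opt \<le> bellman q a p_opt" using Max_ge[OF fin] by simp
  then show ?thesis using a(1) Ast_iff by blast
qed

section \<open>The Bellman equation and least supersolutions\<close>

definition splice_adv ::
  "'q \<Rightarrow> 'a \<Rightarrow> ('q \<Rightarrow> real) \<Rightarrow> ('q \<Rightarrow> 'q list \<Rightarrow> 'a \<Rightarrow> 'q \<Rightarrow> real) \<Rightarrow> 'q list \<Rightarrow> 'a \<Rightarrow> 'q \<Rightarrow> real"
where
  "splice_adv q a \<gamma> \<xi>s = (\<lambda>w b. if 2 \<le> length w then \<xi>s (w ! 1) (tl w) b
                                else if w = [q] \<and> b = a then \<gamma> else default_adv w b)"

lemma splice_adv_Adv:
  assumes "\<gamma> \<in> \<Gamma> q a" "\<And>q'. q' \<in> Q \<Longrightarrow> \<xi>s q' \<in> Adv"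
  shows "splice_adv q a \<gamma> \<xi>s \<in> Adv"
  unfolding adversaries_def
proof (intro CollectI allI impI)
  fix w b assume wb: "w \<noteq> [] \<and> set w \<subseteq> Q \<and> b \<in> A"
  show "splice_adv q a \<gamma> \<xi>s w b \<in> \<Gamma> (last w) b"
  proof (cases "2 \<le> length w")
    case True
    then obtain x y v where w: "w = x # y # v" by (metis Suc_le_length_iff numeral_2_eq_2)
    then have "\<xi>s y \<in> Adv" "y # v \<noteq> []" "set (y # v) \<subseteq> Q" using wb assms(2) by auto
    then have "\<xi>s y (y # v) b \<in> \<Gamma> (last (y # v)) b" using wb unfolding adversaries_def by blast
    then show ?thesis by (simp add: splice_adv_def w)
  next
    case False
    then show ?thesis using assms(1) default_adv_in[of w b] wb by (auto simp: splice_adv_def)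
  qed
qed

lemma kreach_splice_adv:
  assumes "\<sigma> \<in> strategies A" "\<sigma> [q] = a" "q \<in> Qs" "q \<notin> T"
    and "\<gamma> \<in> \<Gamma> q a" "\<And>q'. q' \<in> Q \<Longrightarrow> \<xi>s q' \<in> Adv"
  shows "kreach (policy_kernel \<sigma> (splice_adv q a \<gamma> \<xi>s)) q
    = (\<Sum>q'\<in>Q. \<gamma> q' * kreach (policy_kernel (\<lambda>w. \<sigma> (q # w)) (\<xi>s q')) q')"
proof -
  let ?K = "policy_kernel \<sigma> (splice_adv q a \<gamma> \<xi>s)"
  have "kreach (kshift q ?K) q' = kreach (policy_kernel (\<lambda>w. \<sigma> (q # w)) (\<xi>s q')) q'" for q'
  proof (rule kreach_cong)
    fix u :: "'q list" assume "u \<noteq> []" "set u \<subseteq> Q" "hd u = q'"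
    then have "(q # u) ! 1 = q'" "2 \<le> length (q # u)" by (cases u, auto)+
    then show "kshift q ?K u = policy_kernel (\<lambda>w. \<sigma> (q # w)) (\<xi>s q') u"
      by (simp add: kshift_def policy_kernel_def splice_adv_def)
  qed
  moreover have "?K [q] = \<gamma>" using assms(2) by (simp add: policy_kernel_def splice_adv_def)
  moreover have "kernel_on Q ?K" by (rule kernel_on_Adv[OF assms(1) splice_adv_Adv[OF assms(5,6)]])
  ultimately show ?thesis using kreach_first_step[OF _ assms(3,4)] by simp
qed

lemma strategy_value_le_bellman:
  assumes \<sigma>: "\<sigma> \<in> strategies A" and q: "q \<in> Qs" "q \<notin> T"
  shows "strategy_value \<sigma> q \<le> bellman q (\<sigma> [q]) p_opt"
proof (rule field_le_epsilon)
  fix e :: real assume e: "0 < e"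
  define a where "a = \<sigma> [q]"
  define \<sigma>' where "\<sigma>' = (\<lambda>w. \<sigma> (q # w))"
  have aA: "a \<in> A" using \<sigma> by (simp add: strategies_def a_def)
  have qQ: "q \<in> Q" using q Qs_subset by blast
  have \<sigma>': "\<sigma>' \<in> strategies A" unfolding \<sigma>'_def by (rule strategies_shift[OF \<sigma>])
  have "bellman q a p_opt < bellman q a p_opt + e / 2" using e by simp
  then obtain \<gamma> where \<gamma>: "\<gamma> \<in> \<Gamma> q a" "(\<Sum>q'\<in>Q. \<gamma> q' * p_opt q') < bellman q a p_opt + e / 2"
    using bellman_less[OF qQ aA] by blast
  have "\<forall>q'\<in>Q. \<exists>\<xi>. \<xi> \<in> Adv \<and> kreach (policy_kernel \<sigma>' \<xi>) q' < strategy_value \<sigma>' q' + e / 2"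
    using strategy_value_less[OF \<sigma>' _ half_gt_zero[OF e]] by blast
  then obtain \<xi>s where "\<forall>q'\<in>Q. \<xi>s q' \<in> Adv \<and>
      kreach (policy_kernel \<sigma>' (\<xi>s q')) q' < strategy_value \<sigma>' q' + e / 2"
    by (rule bchoice[elim_format]) blast
  then have \<xi>s: "\<And>q'. q' \<in> Q \<Longrightarrow> \<xi>s q' \<in> Adv"
    "\<And>q'. q' \<in> Q \<Longrightarrow> kreach (policy_kernel \<sigma>' (\<xi>s q')) q' < strategy_value \<sigma>' q' + e / 2"
    by blast+
  have \<gamma>d: "\<gamma> \<in> distr Q" using \<Gamma>_distr[OF qQ aA] \<gamma>(1) by blast
  have "strategy_value \<sigma> q \<le> kreach (policy_kernel \<sigma> (splice_adv q a \<gamma> \<xi>s)) q"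
    by (rule strategy_value_le[OF \<sigma> qQ splice_adv_Adv[OF \<gamma>(1) \<xi>s(1)]])
  also have "\<dots> = (\<Sum>q'\<in>Q. \<gamma> q' * kreach (policy_kernel \<sigma>' (\<xi>s q')) q')"
    unfolding \<sigma>'_def by (rule kreach_splice_adv[OF \<sigma> a_def[symmetric] q \<gamma>(1) \<xi>s(1)])
  also have "\<dots> \<le> (\<Sum>q'\<in>Q. \<gamma> q' * (p_opt q' + e / 2))"
  proof (rule sum_distr_mono[OF \<gamma>d])
    fix q' assume q': "q' \<in> Q"
    show "kreach (policy_kernel \<sigma>' (\<xi>s q')) q' \<le> p_opt q' + e / 2"
      using \<xi>s(2)[OF q'] strategy_value_le_p_opt[OF \<sigma>' q'] by linarith
  qed
  also have "\<dots> = (\<Sum>q'\<in>Q. \<gamma> q' * p_opt q') + e / 2" by (rule sum_distr_add_const[OF \<gamma>d])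
  also have "\<dots> \<le> bellman q (\<sigma> [q]) p_opt + e" using \<gamma>(2) by (simp add: a_def)
  finally show "strategy_value \<sigma> q \<le> bellman q (\<sigma> [q]) p_opt + e" .
qed

lemma p_opt_le_bellman:
  assumes "q \<in> Qs" "q \<notin> T" "a \<in> Ast q"
  shows "p_opt q \<le> bellman q a p_opt"
  unfolding p_opt_eq_SUP[of q]
proof (rule cSUP_least[OF strategies_nonempty])
  fix \<sigma> :: "'q list \<Rightarrow> 'a" assume \<sigma>: "\<sigma> \<in> strategies A"
  then have "\<sigma> [q] \<in> A" by (simp add: strategies_def)
  then have "bellman q (\<sigma> [q]) p_opt \<le> bellman q a p_opt" using assms(3) Ast_iff by blast
  then show "strategy_value \<sigma> q \<le> bellman q a p_opt"
    using strategy_value_le_bellman[OF \<sigma> assms(1,2)] by linarith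
qed

definition splice_strategy :: "'a \<Rightarrow> ('q \<Rightarrow> 'q list \<Rightarrow> 'a) \<Rightarrow> 'q list \<Rightarrow> 'a" where
  "splice_strategy a \<sigma>s = (\<lambda>w. if 2 \<le> length w \<and> w ! 1 \<in> Q then \<sigma>s (w ! 1) (tl w) else a)"

lemma splice_strategy_strategies:
  "a \<in> A \<Longrightarrow> (\<And>q'. q' \<in> Q \<Longrightarrow> \<sigma>s q' \<in> strategies A) \<Longrightarrow> splice_strategy a \<sigma>s \<in> strategies A"
  by (auto simp: splice_strategy_def strategies_def)

lemma kreach_splice_strategy:
  assumes "a \<in> A" "\<And>q'. q' \<in> Q \<Longrightarrow> \<sigma>s q' \<in> strategies A" "\<xi> \<in> Adv" "q \<in> Qs" "q \<notin> T"
  shows "kreach (policy_kernel (splice_strategy a \<sigma>s) \<xi>) q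
    = (\<Sum>q'\<in>Q. \<xi> [q] a q' * kreach (policy_kernel (\<sigma>s q') (\<lambda>w. \<xi> (q # w))) q')"
proof -
  let ?K = "policy_kernel (splice_strategy a \<sigma>s) \<xi>"
  have shift: "kreach (kshift q ?K) q' = kreach (policy_kernel (\<sigma>s q') (\<lambda>w. \<xi> (q # w))) q'"
    if "q' \<in> Q" for q'
  proof (rule kreach_cong)
    fix u :: "'q list" assume "u \<noteq> []" "set u \<subseteq> Q" "hd u = q'"
    then have "(q # u) ! 1 = q'" "2 \<le> length (q # u)" by (cases u, auto)+
    then show "kshift q ?K u = policy_kernel (\<sigma>s q') (\<lambda>w. \<xi> (q # w)) u"
      using that by (simp add: kshift_def policy_kernel_def splice_strategy_def)
  qed
  have K1: "?K [q] = \<xi> [q] a" by (simp add: policy_kernel_def splice_strategy_def)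
  have "kernel_on Q ?K"
    by (rule kernel_on_Adv[OF splice_strategy_strategies[OF assms(1,2)] assms(3)])
  then have "kreach ?K q = (\<Sum>q'\<in>Q. ?K [q] q' * kreach (kshift q ?K) q')"
    by (rule kreach_first_step[OF _ assms(4,5)])
  also have "\<dots> = (\<Sum>q'\<in>Q. \<xi> [q] a q' * kreach (policy_kernel (\<sigma>s q') (\<lambda>w. \<xi> (q # w))) q')"
    by (intro sum.cong) (simp_all add: shift K1)
  finally show ?thesis .
qed

lemma bellman_le_p_opt:
  assumes q: "q \<in> Qs" "q \<notin> T" and a: "a \<in> A"
  shows "bellman q a p_opt \<le> p_opt q"
proof (rule field_le_epsilon)
  fix e :: real assume e: "0 < e"
  have qQ: "q \<in> Q" using q Qs_subset by blast
  have "\<forall>q'\<in>Q. \<exists>\<sigma>'. \<sigma>' \<in> strategies A \<and> p_opt q' - e < strategy_value \<sigma>' q'"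
    using p_opt_less[OF _ e] by blast
  then obtain \<sigma>s where "\<forall>q'\<in>Q. \<sigma>s q' \<in> strategies A \<and> p_opt q' - e < strategy_value (\<sigma>s q') q'"
    by (rule bchoice[elim_format]) blast
  then have \<sigma>s: "\<And>q'. q' \<in> Q \<Longrightarrow> \<sigma>s q' \<in> strategies A"
    "\<And>q'. q' \<in> Q \<Longrightarrow> p_opt q' - e < strategy_value (\<sigma>s q') q'"
    by blast+
  let ?\<sigma> = "splice_strategy a \<sigma>s"
  have "bellman q a p_opt - e \<le> strategy_value ?\<sigma> q"
    unfolding strategy_value_def
  proof (rule cINF_greatest[OF Adv_nonempty])
    fix \<xi> assume \<xi>: "\<xi> \<in> Adv"
    have "[q] \<noteq> [] \<and> set [q] \<subseteq> Q \<and> a \<in> A" using qQ a by simp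
    then have "\<xi> [q] a \<in> \<Gamma> (last [q]) a" using \<xi> unfolding adversaries_def by blast
    then have \<gamma>: "\<xi> [q] a \<in> \<Gamma> q a" by simp
    then have \<gamma>d: "\<xi> [q] a \<in> distr Q" using \<Gamma>_distr[OF qQ a] by blast
    have \<xi>': "(\<lambda>w. \<xi> (q # w)) \<in> Adv" by (rule adversaries_shift[OF \<xi> qQ])
    have "bellman q a p_opt - e \<le> (\<Sum>q'\<in>Q. \<xi> [q] a q' * p_opt q') + (- e)"
      using bellman_le[OF qQ a \<gamma>] by simp
    also have "\<dots> = (\<Sum>q'\<in>Q. \<xi> [q] a q' * (p_opt q' + (- e)))"
      by (rule sum_distr_add_const[OF \<gamma>d, symmetric])
    also have "\<dots> \<le> (\<Sum>q'\<in>Q. \<xi> [q] a q' * kreach (policy_kernel (\<sigma>s q') (\<lambda>w. \<xi> (q # w))) q')"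
    proof (rule sum_distr_mono[OF \<gamma>d])
      fix q' assume q': "q' \<in> Q"
      show "p_opt q' + - e \<le> kreach (policy_kernel (\<sigma>s q') (\<lambda>w. \<xi> (q # w))) q'"
        using \<sigma>s(2)[OF q'] strategy_value_le[OF \<sigma>s(1)[OF q'] q' \<xi>'] by linarith
    qed
    also have "\<dots> = kreach (policy_kernel ?\<sigma> \<xi>) q"
      by (rule kreach_splice_strategy[OF a \<sigma>s(1) \<xi> q, symmetric])
    finally show "bellman q a p_opt - e \<le> kreach (policy_kernel ?\<sigma> \<xi>) q" .
  qed
  also have "\<dots> \<le> p_opt q"
    by (rule strategy_value_le_p_opt[OF splice_strategy_strategies[OF a \<sigma>s(1)] qQ])
  finally show "bellman q a p_opt \<le> p_opt q + e" by simp
qed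

lemma kreach_within_le_supersolution:
  assumes u_T: "\<And>q. q \<in> T \<Longrightarrow> 1 \<le> u q" and u_nonneg: "\<And>q. q \<in> Q \<Longrightarrow> 0 \<le> u q"
    and K: "kernel_on Q K" and q: "q \<in> Q" and c: "0 < c"
    and K_super: "\<And>w. w \<noteq> [] \<Longrightarrow> set w \<subseteq> Q \<Longrightarrow> last w \<in> Qs \<Longrightarrow> last w \<notin> T \<Longrightarrow>
        (\<Sum>q'\<in>Q. K w q' * u q') \<le> u (last w) + c * (1/2) ^ length w"
  shows "kevent_prob Q K q k (reach_event Qs T k) \<le> u q + c"
  using K q c K_super
proof (induction k arbitrary: K q c)
  case 0
  then show ?case
    using kreach_within_target[OF 0(1)] u_T u_nonneg
    by (cases "q \<in> T") (simp_all add: kevent_prob_0 reach_event_0 add_nonneg_pos add_increasing2)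
next
  case (Suc k)
  consider "q \<in> T" | "q \<notin> Qs" | "q \<in> Qs" "q \<notin> T" by blast
  then show ?case
  proof cases
    case 1
    then show ?thesis using kreach_within_target[OF Suc.prems(1)] u_T Suc.prems(3) by fastforce
  next
    case 2
    then show ?thesis using kreach_within_unsafe u_nonneg[OF Suc.prems(2)] Suc.prems(3) by simp
  next
    case 3
    have d: "K [q] \<in> distr Q" by (rule kernel_on_distr[OF Suc.prems(1,2)])
    have IH: "kevent_prob Q (kshift q K) q' k (reach_event Qs T k) \<le> u q' + c / 2"
      if q': "q' \<in> Q" for q'
    proof (rule Suc.IH[OF kernel_on_kshift[OF Suc.prems(1,2)] q'])
      show "0 < c / 2" using Suc.prems(3) by simp
      fix w assume "w \<noteq> []" "set w \<subseteq> Q" "last w \<in> Qs" "last w \<notin> T"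
      then show "(\<Sum>q'\<in>Q. kshift q K w q' * u q') \<le> u (last w) + c / 2 * (1 / 2) ^ length w"
        using Suc.prems(4)[of "q # w"] Suc.prems(2) by (simp add: kshift_def)
    qed
    have "kevent_prob Q K q (Suc k) (reach_event Qs T (Suc k))
        = (\<Sum>q'\<in>Q. K [q] q' * kevent_prob Q (kshift q K) q' k (reach_event Qs T k))"
      by (rule kreach_within_Suc[OF 3])
    also have "\<dots> \<le> (\<Sum>q'\<in>Q. K [q] q' * (u q' + c / 2))" by (rule sum_distr_mono[OF d IH])
    also have "\<dots> = (\<Sum>q'\<in>Q. K [q] q' * u q') + c / 2" by (rule sum_distr_add_const[OF d])
    also have "\<dots> \<le> u q + c" using Suc.prems(4)[of "[q]"] Suc.prems(2) 3 by simp
    finally show ?thesis .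
  qed
qed

text \<open>The errors \<open>c * (1/2) ^ length w\<close> sum to at most \<open>c\<close> along any path.\<close>

definition greedy_adv :: "('q \<Rightarrow> real) \<Rightarrow> real \<Rightarrow> 'q list \<Rightarrow> 'a \<Rightarrow> 'q \<Rightarrow> real" where
  "greedy_adv u c = (\<lambda>w b.
     if w \<noteq> [] \<and> set w \<subseteq> Q \<and> last w \<in> Qs \<and> last w \<notin> T \<and> b \<in> A
     then SOME \<gamma>. \<gamma> \<in> \<Gamma> (last w) b \<and> (\<Sum>q'\<in>Q. \<gamma> q' * u q') < u (last w) + c * (1/2) ^ length w
     else default_adv w b)"

lemma greedy_adv:
  assumes u_super: "\<And>q a. q \<in> Qs \<Longrightarrow> q \<notin> T \<Longrightarrow> a \<in> A \<Longrightarrow> bellman q a u \<le> u q" and c: "0 < c"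
  shows "greedy_adv u c \<in> Adv"
    and "\<And>w b. w \<noteq> [] \<Longrightarrow> set w \<subseteq> Q \<Longrightarrow> last w \<in> Qs \<Longrightarrow> last w \<notin> T \<Longrightarrow> b \<in> A \<Longrightarrow>
           (\<Sum>q'\<in>Q. greedy_adv u c w b q' * u q') \<le> u (last w) + c * (1/2) ^ length w"
proof -
  let ?P = "\<lambda>w b \<gamma>. \<gamma> \<in> \<Gamma> (last w) b \<and> (\<Sum>q'\<in>Q. \<gamma> q' * u q') < u (last w) + c * (1/2) ^ length w"
  have P: "?P w b (greedy_adv u c w b)"
    if w: "w \<noteq> []" "set w \<subseteq> Q" "last w \<in> Qs" "last w \<notin> T" and b: "b \<in> A" for w b
  proof -
    have "last w \<in> Q" using w(1,2) last_in_set by blast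
    moreover have "0 < c * (1/2) ^ length w" using c by simp
    then have "bellman (last w) b u < u (last w) + c * (1/2) ^ length w"
      using u_super[OF w(3,4) b] by linarith
    ultimately have "\<exists>\<gamma>. ?P w b \<gamma>" using bellman_less[OF _ b] by blast
    then have "?P w b (SOME \<gamma>. ?P w b \<gamma>)" by (rule someI_ex)
    then show ?thesis using w b by (simp add: greedy_adv_def)
  qed
  show "greedy_adv u c \<in> Adv"
    unfolding adversaries_def
  proof (intro CollectI allI impI)
    fix w b assume wb: "w \<noteq> [] \<and> set w \<subseteq> Q \<and> b \<in> A"
    show "greedy_adv u c w b \<in> \<Gamma> (last w) b"
    proof (cases "last w \<in> Qs \<and> last w \<notin> T")
      case True
      then show ?thesis using P wb by blast
    next
      case False
      then show ?thesis using wb default_adv_in[of w b] by (auto simp: greedy_adv_def)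
    qed
  qed
  fix w b assume "w \<noteq> []" "set w \<subseteq> Q" "last w \<in> Qs" "last w \<notin> T" "b \<in> A"
  then show "(\<Sum>q'\<in>Q. greedy_adv u c w b q' * u q') \<le> u (last w) + c * (1/2) ^ length w"
    using P[of w b] by (simp add: less_imp_le)
qed

lemma p_opt_le_supersolution:
  assumes u_T: "\<And>q. q \<in> T \<Longrightarrow> 1 \<le> u q" and u_nonneg: "\<And>q. q \<in> Q \<Longrightarrow> 0 \<le> u q"
    and u_super: "\<And>q a. q \<in> Qs \<Longrightarrow> q \<notin> T \<Longrightarrow> a \<in> A \<Longrightarrow> bellman q a u \<le> u q"
    and q: "q \<in> Q"
  shows "p_opt q \<le> u q"
proof (rule field_le_epsilon)
  fix c :: real assume c: "0 < c"
  note \<xi> = greedy_adv[OF u_super c]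
  have "strategy_value \<sigma> q \<le> u q + c" if \<sigma>: "\<sigma> \<in> strategies A" for \<sigma>
  proof -
    have "kreach (policy_kernel \<sigma> (greedy_adv u c)) q \<le> u q + c"
      unfolding kreach_def
    proof (rule cSUP_least)
      fix k
      show "kevent_prob Q (policy_kernel \<sigma> (greedy_adv u c)) q k (reach_event Qs T k) \<le> u q + c"
      proof (rule kreach_within_le_supersolution[OF u_T u_nonneg kernel_on_Adv[OF \<sigma> \<xi>(1)] q c])
        fix w :: "'q list" assume "w \<noteq> []" "set w \<subseteq> Q" "last w \<in> Qs" "last w \<notin> T"
        then show "(\<Sum>q'\<in>Q. policy_kernel \<sigma> (greedy_adv u c) w q' * u q')
            \<le> u (last w) + c * (1/2) ^ length w"
          using \<xi>(2) \<sigma> by (simp add: policy_kernel_def strategies_def)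
      qed
    qed simp
    then show ?thesis using strategy_value_le[OF \<sigma> q \<xi>(1)] by linarith
  qed
  then show "p_opt q \<le> u q + c"
    unfolding p_opt_eq_SUP by (rule cSUP_least[OF strategies_nonempty])
qed

section \<open>Level sets\<close>

definition min_mass :: "'q set \<Rightarrow> 'q \<Rightarrow> 'a \<Rightarrow> real" where
  "min_mass S q a = (INF \<gamma>\<in>\<Gamma> q a. \<Sum>q'\<in>S. \<gamma> q')"

definition sat_level :: nat where
  "sat_level = mmax - 1"

lemma Qm_Suc: "Qm (Suc k) = Qm k \<union> {q \<in> Q - Qm k. \<exists>a\<in>Ast q. min_mass (Qm k) q a > 0}"
  by (simp add: min_mass_def)

lemma Qm_subset: "Qm k \<subseteq> Q"
  using T_subset_Q by (induction k) (auto simp: Qm_Suc)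

lemma Qm_mono: "k \<le> k' \<Longrightarrow> Qm k \<subseteq> Qm k'"
  by (rule lift_Suc_mono_le[of Qm]) (auto simp: Qm_Suc)

lemma T_subset_Qm: "T \<subseteq> Qm k"
  using Qm_mono[of 0 k] by simp

lemma Qm_stabilizes: "\<exists>k. k \<ge> 1 \<and> Qm k = Qm (k - 1)"
proof (rule ccontr)
  assume "\<not> ?thesis"
  then have "Qm (Suc k) \<noteq> Qm k" for k
    by (metis diff_Suc_1 le_add1 plus_1_eq_Suc)
  moreover have "Qm k \<subseteq> Qm (Suc k)" for k by (rule Qm_mono) simp
  ultimately have grow: "Qm k \<subset> Qm (Suc k)" for k by blast
  have "k \<le> card (Qm k)" for k
  proof (induction k)
    case (Suc k)
    have "finite (Qm (Suc k))" using Qm_subset finite_Q finite_subset by blast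
    then have "card (Qm k) < card (Qm (Suc k))" using grow[of k] by (rule psubset_card_mono)
    then show ?case using Suc.IH by simp
  qed simp
  moreover have "card (Qm (Suc (card Q))) \<le> card Q" by (rule card_mono[OF finite_Q Qm_subset])
  ultimately show False using Suc_n_not_le_n le_trans by blast
qed

lemma mmax_eq_Suc_sat_level: "mmax = Suc sat_level"
  using LeastI_ex[OF Qm_stabilizes] by (simp add: sat_level_def)

lemma Qm_Suc_sat_level: "Qm (Suc sat_level) = Qm sat_level"
  using LeastI_ex[OF Qm_stabilizes] by (simp add: sat_level_def flip: mmax_eq_Suc_sat_level)

lemma min_mass_bdd:
  assumes "q \<in> Q" "a \<in> A"
  shows "bdd_below ((\<lambda>\<gamma>. \<Sum>q'\<in>S. \<gamma> q') ` \<Gamma> q a)"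
proof (rule bdd_belowI[where m=0])
  fix x assume "x \<in> (\<lambda>\<gamma>. \<Sum>q'\<in>S. \<gamma> q') ` \<Gamma> q a"
  then obtain \<gamma> where "\<gamma> \<in> distr Q" "x = (\<Sum>q'\<in>S. \<gamma> q')" using \<Gamma>_distr[OF assms] by blast
  then show "0 \<le> x" by (simp add: sum_nonneg distr_nonneg)
qed

lemma min_mass_le: "q \<in> Q \<Longrightarrow> a \<in> A \<Longrightarrow> \<gamma> \<in> \<Gamma> q a \<Longrightarrow> min_mass S q a \<le> (\<Sum>q'\<in>S. \<gamma> q')"
  unfolding min_mass_def by (rule cINF_lower[OF min_mass_bdd])

lemma min_mass_less:
  "q \<in> Q \<Longrightarrow> a \<in> A \<Longrightarrow> min_mass S q a < c \<Longrightarrow> \<exists>\<gamma>\<in>\<Gamma> q a. (\<Sum>q'\<in>S. \<gamma> q') < c"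
  unfolding min_mass_def using cINF_less_iff[OF \<Gamma>_nonempty min_mass_bdd] by blast

lemma qu_notin_Qm: "qu \<notin> Qm k"
proof (induction k)
  case 0
  then show ?case using T_subset qu_unsafe by auto
next
  case (Suc k)
  have "min_mass (Qm k) qu a \<le> 0" if "a \<in> Ast qu" for a
  proof -
    have a: "a \<in> A" using that Ast_iff by blast
    have "min_mass (Qm k) qu a \<le> (\<Sum>q'\<in>Qm k. dirac qu q')"
      by (rule min_mass_le[OF qu_in_Q a]) (simp add: \<Gamma>_unsafe[OF a])
    also have "\<dots> = 0" using Suc.IH by (intro sum.neutral) (auto simp: dirac_def)
    finally show ?thesis .
  qed
  then show ?case using Suc.IH unfolding Qm_Suc by fastforce
qed

lemma min_mass_outside_saturated:
  assumes "q \<in> Q" "q \<notin> Qm sat_level" "a \<in> Ast q"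
  shows "min_mass (Qm sat_level) q a \<le> 0"
proof (rule ccontr)
  assume "\<not> ?thesis"
  then have "0 < min_mass (Qm sat_level) q a" by simp
  then have "q \<in> Qm (Suc sat_level)" using assms unfolding Qm_Suc by blast
  then show False using assms(2) unfolding Qm_Suc_sat_level by blast
qed

text \<open>An optimal action puts arbitrarily little mass on the saturated level set.\<close>

lemma bellman_outside_saturated:
  assumes q: "q \<in> Q" "q \<notin> Qm sat_level" and a: "a \<in> Ast q"
    and f_le_1: "\<And>q'. q' \<in> Qm sat_level \<Longrightarrow> f q' \<le> 1"
    and f_le_c: "\<And>q'. q' \<in> Q - Qm sat_level \<Longrightarrow> f q' \<le> c" and c: "0 \<le> c"
  shows "bellman q a f \<le> c"
proof (rule field_le_epsilon)
  fix e :: real assume e: "0 < e"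
  have aA: "a \<in> A" using a Ast_iff by blast
  have "min_mass (Qm sat_level) q a < e" using min_mass_outside_saturated[OF q a] e by linarith
  then obtain \<gamma> where \<gamma>: "\<gamma> \<in> \<Gamma> q a" "(\<Sum>q'\<in>Qm sat_level. \<gamma> q') < e"
    using min_mass_less[OF q(1) aA] by blast
  have \<gamma>d: "\<gamma> \<in> distr Q" using \<Gamma>_distr[OF q(1) aA] \<gamma>(1) by blast
  note nonneg = distr_nonneg[OF \<gamma>d]
  have "(\<Sum>q'\<in>Qm sat_level. \<gamma> q' * f q') \<le> (\<Sum>q'\<in>Qm sat_level. \<gamma> q')"
    using f_le_1 nonneg by (intro sum_mono) (simp add: mult_left_le)
  moreover have "(\<Sum>q'\<in>Q - Qm sat_level. \<gamma> q' * f q') \<le> (\<Sum>q'\<in>Q - Qm sat_level. \<gamma> q') * c"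
    unfolding sum_distrib_right using f_le_c nonneg by (intro sum_mono mult_left_mono) auto
  moreover have "(\<Sum>q'\<in>Q - Qm sat_level. \<gamma> q') \<le> 1"
    using sum_mono2[OF finite_Q, of "Q - Qm sat_level" \<gamma>] nonneg distr_sum[OF \<gamma>d] by auto
  then have "(\<Sum>q'\<in>Q - Qm sat_level. \<gamma> q') * c \<le> c"
    using nonneg by (intro mult_left_le_one_le[OF c] sum_nonneg) auto
  moreover have "(\<Sum>q'\<in>Q. \<gamma> q' * f q') = (\<Sum>q'\<in>Q - Qm sat_level. \<gamma> q' * f q') + (\<Sum>q'\<in>Qm sat_level. \<gamma> q' * f q')"
    by (rule sum.subset_diff[OF Qm_subset finite_Q])
  ultimately have "(\<Sum>q'\<in>Q. \<gamma> q' * f q') \<le> c + e" using \<gamma>(2) by linarith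
  then show "bellman q a f \<le> c + e" using bellman_le[OF q(1) aA \<gamma>(1), of f] by linarith
qed

text \<open>Otherwise the function that is \<open>M - \<delta>\<close> on \<open>S\<close> and \<open>p_opt\<close> elsewhere would be a
  supersolution below \<open>p_opt\<close>.\<close>

lemma argmax_outside_saturated_empty:
  assumes S: "S \<subseteq> Q - Qm sat_level" "\<And>q. q \<in> S \<Longrightarrow> p_opt q = M"
    and \<delta>: "0 < \<delta>" "\<delta> \<le> M"
    and rest: "\<And>q. q \<in> Q - Qm sat_level - S \<Longrightarrow> p_opt q \<le> M - \<delta>"
    and non_opt: "\<And>q b. q \<in> S \<Longrightarrow> b \<in> A - Ast q \<Longrightarrow> bellman q b p_opt \<le> M - \<delta>"
  shows "S = {}"
proof (rule ccontr)
  assume "S \<noteq> {}"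
  then obtain q1 where q1: "q1 \<in> S" by blast
  define u where "u q = (if q \<in> S then M - \<delta> else p_opt q)" for q
  have u_le_p: "u q \<le> p_opt q" if "q \<in> Q" for q
    using S(2) \<delta>(1) by (simp add: u_def)
  have "p_opt q1 \<le> u q1"
  proof (rule p_opt_le_supersolution)
    show "1 \<le> u q" if "q \<in> T" for q
      using that S(1) T_subset_Qm[of sat_level] p_opt_target by (auto simp: u_def)
    show "0 \<le> u q" if "q \<in> Q" for q
      using \<delta>(2) p_opt_nonneg[OF that] by (simp add: u_def)
    show "q1 \<in> Q" using q1 S(1) by blast
    show "bellman q a u \<le> u q" if q: "q \<in> Qs" "q \<notin> T" and a: "a \<in> A" for q a
    proof -
      have qQ: "q \<in> Q" using q(1) Qs_subset by blast
      have mono: "bellman q a u \<le> bellman q a p_opt" by (rule bellman_mono[OF qQ a u_le_p])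
      show ?thesis
      proof (cases "q \<in> S")
        case False
        then show ?thesis using mono bellman_le_p_opt[OF q a] by (simp add: u_def)
      next
        case qS: True
        show ?thesis
        proof (cases "a \<in> Ast q")
          case True
          have "bellman q a u \<le> M - \<delta>"
          proof (rule bellman_outside_saturated[OF qQ _ True])
            show "q \<notin> Qm sat_level" using qS S(1) by blast
            show "u q' \<le> 1" if "q' \<in> Qm sat_level" for q'
              using that u_le_p[of q'] p_opt_le_1[of q'] Qm_subset by fastforce
            show "u q' \<le> M - \<delta>" if "q' \<in> Q - Qm sat_level" for q'
              using that rest by (auto simp: u_def)
            show "0 \<le> M - \<delta>" using \<delta>(2) by simp
          qed
          then show ?thesis using qS by (simp add: u_def)
        next
          case False
          then show ?thesis using qS mono non_opt[of q a] a by (simp add: u_def)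
        qed
      qed
    qed
  qed
  then show False using q1 S(2) \<delta>(1) by (simp add: u_def)
qed

lemma p_opt_pos_in_saturated:
  assumes q0: "q0 \<in> Q" "0 < p_opt q0"
  shows "q0 \<in> Qm sat_level"
proof (rule ccontr)
  assume q0_out: "q0 \<notin> Qm sat_level"
  define R where "R = Q - Qm sat_level"
  define M where "M = Max (p_opt ` R)"
  define S where "S = {q \<in> R. p_opt q = M}"
  have finR: "finite R" using finite_Q by (simp add: R_def)
  have M_ge: "p_opt q \<le> M" if "q \<in> R" for q unfolding M_def using finR that by simp
  have "M \<in> p_opt ` R" unfolding M_def using finR q0 q0_out by (intro Max_in) (auto simp: R_def)
  then have "S \<noteq> {}" by (auto simp: S_def)
  have M_pos: "0 < M" using M_ge[of q0] q0 q0_out by (simp add: R_def)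
  have bellman_S: "bellman q b p_opt \<le> M" if q: "q \<in> S" and b: "b \<in> A" for q b
  proof -
    obtain a where a: "a \<in> Ast q" using Ast_nonempty by blast
    then have "bellman q b p_opt \<le> bellman q a p_opt" using b Ast_iff by blast
    also have "\<dots> \<le> M"
      using q a M_ge p_opt_le_1 Qm_subset M_pos
      by (intro bellman_outside_saturated) (auto simp: S_def R_def)
    finally show ?thesis .
  qed
  have non_opt: "bellman q b p_opt < M" if q: "q \<in> S" and b: "b \<in> A - Ast q" for q b
  proof -
    obtain c where "c \<in> A" "bellman q b p_opt < bellman q c p_opt"
      using b Ast_iff by (auto simp: not_le)
    then show ?thesis using bellman_S[OF q] by fastforce
  qed
  obtain \<delta>1 where \<delta>1: "0 < \<delta>1" "\<And>q'. q' \<in> R - S \<Longrightarrow> \<delta>1 \<le> M - p_opt q'"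
    using finite_pos_lower_bound[of "R - S" "\<lambda>q'. M - p_opt q'"] finR M_ge
    by (force simp: S_def)
  have "finite (SIGMA q:S. A - Ast q)" using finR finite_A by (auto simp: S_def)
  then obtain \<delta>2 where \<delta>2: "0 < \<delta>2"
    "\<And>qb. qb \<in> (SIGMA q:S. A - Ast q) \<Longrightarrow> \<delta>2 \<le> M - bellman (fst qb) (snd qb) p_opt"
    using finite_pos_lower_bound[of "SIGMA q:S. A - Ast q" "\<lambda>qb. M - bellman (fst qb) (snd qb) p_opt"]
      non_opt by force
  define \<delta> where "\<delta> = min M (min \<delta>1 \<delta>2)"
  have "S = {}"
  proof (rule argmax_outside_saturated_empty[where M = M and \<delta> = \<delta>])
    show "p_opt q \<le> M - \<delta>" if "q \<in> Q - Qm sat_level - S" for q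
      using that \<delta>1(2)[of q] by (auto simp: \<delta>_def R_def)
    show "bellman q b p_opt \<le> M - \<delta>" if "q \<in> S" "b \<in> A - Ast q" for q b
      using that \<delta>2(2)[of "(q, b)"] by (auto simp: \<delta>_def)
  qed (use M_pos \<delta>1(1) \<delta>2(1) in \<open>auto simp: \<delta>_def S_def R_def\<close>)
  then show False using \<open>S \<noteq> {}\<close> by blast
qed

lemma least_level_member:
  assumes "S \<noteq> {}" "\<And>q. q \<in> S \<Longrightarrow> q \<notin> T \<and> q \<in> Qm sat_level"
  obtains j q where "q \<in> S" "j \<in> {1..sat_level}" "q \<in> Qm j - Qm (j - 1)" "Qm (j - 1) \<inter> S = {}"
proof -
  define j where "j = (LEAST j. Qm j \<inter> S \<noteq> {})"
  have ex: "Qm sat_level \<inter> S \<noteq> {}" using assms by blast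
  then obtain q where q: "q \<in> S" "q \<in> Qm j"
    using LeastI[of "\<lambda>j. Qm j \<inter> S \<noteq> {}" sat_level] unfolding j_def by blast
  have "j \<le> sat_level" unfolding j_def using ex by (rule Least_le)
  have below: "Qm j' \<inter> S = {}" if "j' < j" for j'
    using not_less_Least[of j' "\<lambda>j. Qm j \<inter> S \<noteq> {}"] that unfolding j_def by blast
  have "j \<noteq> 0"
  proof
    assume "j = 0"
    then show False using q assms(2)[of q] by simp
  qed
  then have "Qm (j - 1) \<inter> S = {}" using below by simp
  then show ?thesis using that[of q j] q \<open>j \<le> sat_level\<close> \<open>j \<noteq> 0\<close> by auto
qed

lemma bellman_diff_le:
  assumes q: "q \<in> Q" "a \<in> A" and S: "S \<subseteq> Q"
    and D: "\<And>q'. q' \<in> Q \<Longrightarrow> f q' - g q' \<le> D"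
    and D': "\<And>q'. q' \<in> S \<Longrightarrow> f q' - g q' \<le> D'" "D' \<le> D"
  shows "bellman q a f - bellman q a g \<le> D - (D - D') * min_mass S q a"
proof (rule field_le_epsilon)
  fix e :: real assume e: "0 < e"
  have "bellman q a g < bellman q a g + e" using e by simp
  then obtain \<gamma> where \<gamma>: "\<gamma> \<in> \<Gamma> q a" "(\<Sum>q'\<in>Q. \<gamma> q' * g q') < bellman q a g + e"
    using bellman_less[OF q] by blast
  have \<gamma>d: "\<gamma> \<in> distr Q" using \<Gamma>_distr[OF q] \<gamma>(1) by blast
  note nonneg = distr_nonneg[OF \<gamma>d]
  define m where "m = (\<Sum>q'\<in>S. \<gamma> q')"
  have m_ge: "min_mass S q a \<le> m" unfolding m_def by (rule min_mass_le[OF q \<gamma>(1)])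
  have rest: "(\<Sum>q'\<in>Q - S. \<gamma> q') = 1 - m"
    using sum.subset_diff[OF S finite_Q, of \<gamma>] distr_sum[OF \<gamma>d] by (simp add: m_def)
  have "(\<Sum>q'\<in>Q. \<gamma> q' * (f q' - g q'))
      = (\<Sum>q'\<in>Q - S. \<gamma> q' * (f q' - g q')) + (\<Sum>q'\<in>S. \<gamma> q' * (f q' - g q'))"
    by (rule sum.subset_diff[OF S finite_Q])
  also have "\<dots> \<le> (\<Sum>q'\<in>Q - S. \<gamma> q' * D) + (\<Sum>q'\<in>S. \<gamma> q' * D')"
    using D D'(1) S nonneg by (intro add_mono sum_mono mult_left_mono) auto
  also have "\<dots> = (1 - m) * D + m * D'"
    by (simp only: sum_distrib_right[symmetric] rest m_def)
  also have "\<dots> = D - (D - D') * m"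
    by (simp add: algebra_simps)
  also have "\<dots> \<le> D - (D - D') * min_mass S q a"
    using mult_left_mono[OF m_ge, of "D - D'"] D'(2) by simp
  finally have "(\<Sum>q'\<in>Q. \<gamma> q' * f q') - (\<Sum>q'\<in>Q. \<gamma> q' * g q') \<le> D - (D - D') * min_mass S q a"
    by (simp add: right_diff_distrib sum_subtractf)
  then show "bellman q a f - bellman q a g \<le> D - (D - D') * min_mass S q a + e"
    using bellman_le[OF q \<gamma>(1), of f] \<gamma>(2) by linarith
qed

end

section \<open>Optimality of the level strategy\<close>

locale level_strategy = robust_mdp Q A \<Gamma> Qs T qu
  for Q :: "'q set" and A :: "'a set" and \<Gamma> Qs T qu +
  fixes \<sigma>s :: "'q \<Rightarrow> 'a"
  assumes \<sigma>s_action: "\<And>q. q \<in> Q \<Longrightarrow> \<sigma>s q \<in> A"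
    and \<sigma>s_choice: "\<And>k q. k \<in> {1..mmax} \<Longrightarrow> q \<in> Qm k - Qm (k - 1) \<Longrightarrow>
        \<sigma>s q \<in> Ast q \<and> (INF \<gamma>\<in>\<Gamma> q (\<sigma>s q). \<Sum>q'\<in>Qm (k - 1). \<gamma> q') > 0"
begin

lemma \<sigma>s_choice_min_mass:
  "k \<in> {1..mmax} \<Longrightarrow> q \<in> Qm k - Qm (k - 1) \<Longrightarrow> \<sigma>s q \<in> Ast q \<and> 0 < min_mass (Qm (k - 1)) q (\<sigma>s q)"
  using \<sigma>s_choice by (simp add: min_mass_def)

text \<open>\<open>stationary \<sigma>s\<close> need not be a strategy in \<open>strategies A\<close>, since \<open>\<sigma>s\<close> is only
  constrained on \<open>Q\<close>; \<open>stat_strategy\<close> agrees with it on all paths in \<open>Q\<close>.\<close>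

definition stat_strategy :: "'q list \<Rightarrow> 'a" where
  "stat_strategy w = (if \<sigma>s (last w) \<in> A then \<sigma>s (last w) else (SOME a. a \<in> A))"

lemma stat_strategy_strategies: "stat_strategy \<in> strategies A"
  using A_nonempty by (auto simp: strategies_def stat_strategy_def some_in_eq)

lemma stat_strategy_eq: "w \<noteq> [] \<Longrightarrow> set w \<subseteq> Q \<Longrightarrow> stat_strategy w = \<sigma>s (last w)"
  using \<sigma>s_action last_in_set by (fastforce simp: stat_strategy_def)

lemma kreach_stationary:
  "kreach (policy_kernel (stationary \<sigma>s) \<xi>) q = kreach (policy_kernel stat_strategy \<xi>) q"
  by (rule kreach_cong) (simp add: policy_kernel_def stationary_def stat_strategy_eq)

lemma kreach_stat_strategy_shift:
  "kreach (kshift q (policy_kernel stat_strategy \<xi>)) q'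
    = kreach (policy_kernel stat_strategy (\<lambda>w. \<xi> (q # w))) q'"
  by (rule kreach_cong) (simp add: kshift_def policy_kernel_def stat_strategy_def)

abbreviation "v_stat \<equiv> strategy_value stat_strategy"

lemma v_stat_supersolution:
  assumes q: "q \<in> Qs" "q \<notin> T"
  shows "bellman q (\<sigma>s q) v_stat \<le> v_stat q"
  unfolding strategy_value_def[of _ q]
proof (rule cINF_greatest[OF Adv_nonempty])
  fix \<xi> assume \<xi>: "\<xi> \<in> Adv"
  have qQ: "q \<in> Q" using q Qs_subset by blast
  let ?K = "policy_kernel stat_strategy \<xi>"
  have a: "\<sigma>s q \<in> A" by (rule \<sigma>s_action[OF qQ])
  have "[q] \<noteq> [] \<and> set [q] \<subseteq> Q \<and> \<sigma>s q \<in> A" using qQ a by simp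
  then have "\<xi> [q] (\<sigma>s q) \<in> \<Gamma> (last [q]) (\<sigma>s q)" using \<xi> unfolding adversaries_def by blast
  then have \<gamma>: "?K [q] \<in> \<Gamma> q (\<sigma>s q)" by (simp add: policy_kernel_def stat_strategy_eq qQ)
  have "bellman q (\<sigma>s q) v_stat \<le> (\<Sum>q'\<in>Q. ?K [q] q' * v_stat q')"
    by (rule bellman_le[OF qQ a \<gamma>])
  also have "\<dots> \<le> (\<Sum>q'\<in>Q. ?K [q] q' * kreach (kshift q ?K) q')"
    unfolding kreach_stat_strategy_shift
    by (rule sum_distr_mono[OF _ strategy_value_le[OF stat_strategy_strategies _ adversaries_shift[OF \<xi> qQ]]])
      (use \<gamma> \<Gamma>_distr[OF qQ a] in blast)
  also have "\<dots> = kreach ?K q"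
    by (rule kreach_first_step[OF kernel_on_Adv[OF stat_strategy_strategies \<xi>] q, symmetric])
  finally show "bellman q (\<sigma>s q) v_stat \<le> kreach ?K q" .
qed

lemma v_stat_le_p_opt: "q \<in> Q \<Longrightarrow> v_stat q \<le> p_opt q"
  by (rule strategy_value_le_p_opt[OF stat_strategy_strategies])

lemma p_opt_le_v_stat:
  assumes q0: "q0 \<in> Q"
  shows "p_opt q0 \<le> v_stat q0"
proof (rule ccontr)
  assume "\<not> p_opt q0 \<le> v_stat q0"
  define d where "d q = p_opt q - v_stat q" for q
  define D where "D = Max (d ` Q)"
  have D_ge: "d q \<le> D" if "q \<in> Q" for q unfolding D_def using finite_Q that by simp
  have D_pos: "0 < D" using D_ge[OF q0] \<open>\<not> p_opt q0 \<le> v_stat q0\<close> by (simp add: d_def)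
  define Sd where "Sd = {q \<in> Q. d q = D}"
  have "D \<in> d ` Q" unfolding D_def using finite_Q q0 by (intro Max_in) auto
  then have "Sd \<noteq> {}" by (auto simp: Sd_def)
  have Sd_props: "q \<in> Qs \<and> q \<notin> T \<and> q \<in> Qm sat_level" if "q \<in> Sd" for q
  proof -
    have qQ: "q \<in> Q" and "d q = D" using that by (auto simp: Sd_def)
    then have "0 < p_opt q"
      using D_pos strategy_value_nonneg[OF stat_strategy_strategies qQ] by (simp add: d_def)
    moreover have "q \<notin> T"
      using \<open>d q = D\<close> D_pos p_opt_target strategy_value_target[OF stat_strategy_strategies]
      by (auto simp: d_def)
    ultimately show ?thesis
      using p_opt_unsafe[of q] p_opt_pos_in_saturated[OF qQ] by fastforce
  qed
  then obtain j q where q: "q \<in> Sd" "j \<in> {1..sat_level}" "q \<in> Qm j - Qm (j - 1)"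
    and below: "Qm (j - 1) \<inter> Sd = {}"
    using least_level_member[OF \<open>Sd \<noteq> {}\<close>] by blast
  have qQ: "q \<in> Q" "q \<in> Qs" "q \<notin> T" using q(1) Sd_props by (auto simp: Sd_def)
  have "j \<in> {1..mmax}" using q(2) mmax_eq_Suc_sat_level by simp
  then have opt: "\<sigma>s q \<in> Ast q" and mass_pos: "0 < min_mass (Qm (j - 1)) q (\<sigma>s q)"
    using \<sigma>s_choice_min_mass q(3) by auto
  have "0 < D - d q'" if "q' \<in> Qm (j - 1)" for q'
    using that below D_ge[of q'] Qm_subset by (force simp: Sd_def)
  then obtain \<delta> where \<delta>: "0 < \<delta>" "\<forall>q'\<in>Qm (j - 1). \<delta> \<le> D - d q'"
    using finite_pos_lower_bound[OF finite_subset[OF Qm_subset[of "j - 1"] finite_Q],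
        of "\<lambda>q'. D - d q'"]
    by blast
  have "D = p_opt q - v_stat q" using q(1) by (simp add: Sd_def d_def)
  also have "\<dots> \<le> bellman q (\<sigma>s q) p_opt - bellman q (\<sigma>s q) v_stat"
    using p_opt_le_bellman[OF qQ(2,3) opt] v_stat_supersolution[OF qQ(2,3)] by linarith
  also have "\<dots> \<le> D - (D - (D - \<delta>)) * min_mass (Qm (j - 1)) q (\<sigma>s q)"
    using D_ge \<delta> by (intro bellman_diff_le[OF qQ(1) \<sigma>s_action[OF qQ(1)] Qm_subset]) (auto simp: d_def)
  also have "\<dots> < D" using \<delta>(1) mass_pos by simp
  finally show False by simp
qed

lemma v_stat_eq_p_opt: "q \<in> Q \<Longrightarrow> v_stat q = p_opt q"
  using v_stat_le_p_opt p_opt_le_v_stat by (simp add: order_antisym)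

section \<open>Properness\<close>

definition \<Gamma>mod :: "'q \<Rightarrow> 'a \<Rightarrow> ('q \<Rightarrow> real) set" where
  "\<Gamma>mod q a = (if q \<in> T then {dirac qu} else \<Gamma> q a)"

definition mod_kernel :: "('q list \<Rightarrow> 'q \<Rightarrow> real) \<Rightarrow> bool" where
  "mod_kernel K \<longleftrightarrow> kernel_on Q K \<and> (\<forall>w. w \<noteq> [] \<longrightarrow> set w \<subseteq> Q \<longrightarrow> K w \<in> \<Gamma>mod (last w) (\<sigma>s (last w)))"

lemma \<Gamma>mod_distr: "q \<in> Q \<Longrightarrow> a \<in> A \<Longrightarrow> \<Gamma>mod q a \<subseteq> distr Q"
  using dirac_in_distr[OF finite_Q qu_in_Q] \<Gamma>_distr by (simp add: \<Gamma>mod_def)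

lemma mod_kernel_policy_kernel:
  assumes "\<xi> \<in> adversaries Q A \<Gamma>mod"
  shows "mod_kernel (policy_kernel (stationary \<sigma>s) \<xi>)"
  unfolding mod_kernel_def
proof (intro conjI allI impI)
  show "kernel_on Q (policy_kernel (stationary \<sigma>s) \<xi>)"
  proof (rule kernel_on_policy_kernel[OF assms \<Gamma>mod_distr])
    fix w :: "'q list" assume "w \<noteq> []" "set w \<subseteq> Q"
    then show "stationary \<sigma>s w \<in> A" using \<sigma>s_action last_in_set by (simp add: stationary_def subset_iff)
  qed
  fix w :: "'q list" assume w: "w \<noteq> []" "set w \<subseteq> Q"
  then have "\<sigma>s (last w) \<in> A" using \<sigma>s_action last_in_set by blast
  then show "policy_kernel (stationary \<sigma>s) \<xi> w \<in> \<Gamma>mod (last w) (\<sigma>s (last w))"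
    using assms w by (simp add: adversaries_def policy_kernel_def stationary_def)
qed

lemma mod_kernel_kshift:
  assumes "mod_kernel K" "q \<in> Q"
  shows "mod_kernel (kshift q K)"
  unfolding mod_kernel_def
proof (intro conjI allI impI)
  show "kernel_on Q (kshift q K)" using assms kernel_on_kshift by (auto simp: mod_kernel_def)
  fix w :: "'q list" assume w: "w \<noteq> []" "set w \<subseteq> Q"
  then have "K (q # w) \<in> \<Gamma>mod (last (q # w)) (\<sigma>s (last (q # w)))"
    using assms unfolding mod_kernel_def by (metis insert_subset list.distinct(1) list.simps(15))
  then show "kshift q K w \<in> \<Gamma>mod (last w) (\<sigma>s (last w))" using w(1) by (simp add: kshift_def)
qed

lemma mod_kernel_Nil: "mod_kernel K \<Longrightarrow> q \<in> Q \<Longrightarrow> K [q] \<in> \<Gamma>mod q (\<sigma>s q)"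
  unfolding mod_kernel_def by (metis empty_subsetI insert_subset last.simps list.set(1,2) not_Cons_self2)

lemma mod_kernel_target: "mod_kernel K \<Longrightarrow> q \<in> T \<Longrightarrow> K [q] = dirac qu"
  using mod_kernel_Nil[of K q] T_subset_Q by (auto simp: \<Gamma>mod_def)

lemma mod_kernel_non_target: "mod_kernel K \<Longrightarrow> q \<in> Q \<Longrightarrow> q \<notin> T \<Longrightarrow> K [q] \<in> \<Gamma> q (\<sigma>s q)"
  using mod_kernel_Nil[of K q] by (simp add: \<Gamma>mod_def)

lemma mod_kernel_unsafe:
  assumes "mod_kernel K"
  shows "K [qu] qu = 1"
proof -
  have "qu \<notin> T" using T_subset qu_unsafe by blast
  then have "K [qu] \<in> \<Gamma> qu (\<sigma>s qu)" by (rule mod_kernel_non_target[OF assms qu_in_Q])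
  then show ?thesis using \<Gamma>_unsafe[OF \<sigma>s_action[OF qu_in_Q]] by (simp add: dirac_def)
qed

lemma mod_kernel_distr: "mod_kernel K \<Longrightarrow> q \<in> Q \<Longrightarrow> K [q] \<in> distr Q"
  by (simp add: mod_kernel_def kernel_on_distr)

definition absorbed :: "('q list \<Rightarrow> 'q \<Rightarrow> real) \<Rightarrow> 'q \<Rightarrow> nat \<Rightarrow> real" where
  "absorbed K q k = kevent_prob Q K q k (\<lambda>w. last w \<in> {qu})"

lemma absorbed_Suc: "q \<in> Q \<Longrightarrow> absorbed K q (Suc k) = (\<Sum>q'\<in>Q. K [q] q' * absorbed (kshift q K) q' k)"
  unfolding absorbed_def by (rule kevent_prob_last_Suc[OF finite_Q])

lemma absorbed_0: "q \<in> Q \<Longrightarrow> absorbed K q 0 = (if q = qu then 1 else 0)"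
  by (simp add: absorbed_def kevent_prob_0)

lemma absorbed_1:
  assumes "q \<in> Q"
  shows "absorbed K q 1 = K [q] qu"
proof -
  have "absorbed K q 1 = (\<Sum>q'\<in>Q. if q' = qu then K [q] q' else 0)"
    unfolding One_nat_def absorbed_Suc[OF assms] by (intro sum.cong) (simp_all add: absorbed_0)
  then show ?thesis using finite_Q qu_in_Q by simp
qed

lemma absorbed_nonneg: "mod_kernel K \<Longrightarrow> 0 \<le> absorbed K q k"
  unfolding absorbed_def mod_kernel_def by (simp add: kevent_prob_nonneg)

lemma absorbed_le_1: "mod_kernel K \<Longrightarrow> q \<in> Q \<Longrightarrow> absorbed K q k \<le> 1"
  unfolding absorbed_def mod_kernel_def by (simp add: kevent_prob_le_1[OF finite_Q])

lemma absorbed_mono: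
  assumes "mod_kernel K" "q \<in> Q"
  shows "absorbed K q k \<le> absorbed K q (Suc k)"
  using assms
proof (induction k arbitrary: K q)
  case 0
  then show ?case
    using mod_kernel_unsafe[OF 0(1)] absorbed_1[OF 0(2)] distr_nonneg[OF mod_kernel_distr[OF 0]]
    by (cases "q = qu") (simp_all add: absorbed_0)
next
  case (Suc k)
  show ?case
    unfolding absorbed_Suc[OF Suc.prems(2)]
    by (rule sum_distr_mono[OF mod_kernel_distr[OF Suc.prems]])
      (rule Suc.IH[OF mod_kernel_kshift[OF Suc.prems]])
qed

lemma absorbed_mono_le: "mod_kernel K \<Longrightarrow> q \<in> Q \<Longrightarrow> k \<le> k' \<Longrightarrow> absorbed K q k \<le> absorbed K q k'"
  by (rule lift_Suc_mono_le[of "absorbed K q"]) (rule absorbed_mono)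

definition mass_bound :: "real \<Rightarrow> bool" where
  "mass_bound \<beta> \<longleftrightarrow> 0 < \<beta> \<and> \<beta> \<le> 1 \<and>
     (\<forall>j\<in>{1..sat_level}. \<forall>q\<in>Qm j - Qm (j - 1). \<beta> \<le> min_mass (Qm (j - 1)) q (\<sigma>s q))"

lemma mass_bound_le:
  "mass_bound \<beta> \<Longrightarrow> j \<in> {1..sat_level} \<Longrightarrow> q \<in> Qm j - Qm (j - 1) \<Longrightarrow> \<beta> \<le> min_mass (Qm (j - 1)) q (\<sigma>s q)"
  unfolding mass_bound_def by blast

lemma mass_bound_exists: "\<exists>\<beta>. mass_bound \<beta>"
proof -
  let ?P = "SIGMA j:{1..sat_level}. Qm j - Qm (j - 1)"
  let ?m = "\<lambda>jq. min_mass (Qm (fst jq - 1)) (snd jq) (\<sigma>s (snd jq))"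
  have "?P \<subseteq> {1..sat_level} \<times> Q" using Qm_subset by blast
  then have "finite ?P" by (rule finite_subset) (simp add: finite_Q)
  moreover have "0 < ?m jq" if jq: "jq \<in> ?P" for jq
  proof -
    obtain j q where "j \<in> {1..sat_level}" "q \<in> Qm j - Qm (j - 1)" "jq = (j, q)"
      using jq by (rule SigmaE)
    moreover have "j \<in> {1..mmax}" using \<open>j \<in> {1..sat_level}\<close> mmax_eq_Suc_sat_level by simp
    ultimately show ?thesis using \<sigma>s_choice_min_mass by simp
  qed
  ultimately obtain \<beta> where \<beta>: "0 < \<beta>" "\<And>jq. jq \<in> ?P \<Longrightarrow> \<beta> \<le> ?m jq"
    using finite_pos_lower_bound[of ?P ?m] by blast
  have "mass_bound (min \<beta> 1)"
    unfolding mass_bound_def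
  proof (intro conjI ballI)
    fix j q assume "j \<in> {1..sat_level}" "q \<in> Qm j - Qm (j - 1)"
    then have "\<beta> \<le> ?m (j, q)" by (intro \<beta>(2)) blast
    then show "min \<beta> 1 \<le> min_mass (Qm (j - 1)) q (\<sigma>s q)" by simp
  qed (use \<beta>(1) in simp_all)
  then show ?thesis ..
qed

text \<open>In each step the level drops by one with probability at least \<open>\<beta>\<close>, and from the
  target the modified MDP moves to the unsafe state.\<close>

lemma absorbed_from_level:
  assumes \<beta>: "mass_bound \<beta>" and "j \<le> sat_level" "q \<in> Qm j" "mod_kernel K"
  shows "\<beta> ^ j \<le> absorbed K q (Suc j)"
  using assms(2-4)
proof (induction j arbitrary: K q)
  case 0
  then show ?case using absorbed_1[of q K] mod_kernel_target T_subset_Q by (auto simp: dirac_def)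
next
  case (Suc j)
  have qQ: "q \<in> Q" using Suc.prems(2) Qm_subset by blast
  have \<beta>01: "0 \<le> \<beta>" "\<beta> \<le> 1" using \<beta> by (auto simp: mass_bound_def)
  show ?case
  proof (cases "q \<in> Qm j")
    case True
    have "\<beta> ^ Suc j \<le> \<beta> ^ j" by (rule power_decreasing) (use \<beta>01 in auto)
    also have "\<dots> \<le> absorbed K q (Suc j)" using Suc.IH[OF _ True Suc.prems(3)] Suc.prems(1) by simp
    also have "\<dots> \<le> absorbed K q (Suc (Suc j))" by (rule absorbed_mono[OF Suc.prems(3) qQ])
    finally show ?thesis .
  next
    case False
    define \<gamma> where "\<gamma> = K [q]"
    have "q \<notin> T" using False T_subset_Qm[of j] by blast
    then have \<gamma>: "\<gamma> \<in> \<Gamma> q (\<sigma>s q)" unfolding \<gamma>_def by (rule mod_kernel_non_target[OF Suc.prems(3) qQ])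
    have nonneg: "0 \<le> \<gamma> x" for x using mod_kernel_distr[OF Suc.prems(3) qQ] distr_nonneg by (simp add: \<gamma>_def)
    have K': "mod_kernel (kshift q K)" by (rule mod_kernel_kshift[OF Suc.prems(3) qQ])
    have "Suc j \<in> {1..sat_level}" "q \<in> Qm (Suc j) - Qm (Suc j - 1)" using Suc.prems(1,2) False by auto
    then have "\<beta> \<le> min_mass (Qm j) q (\<sigma>s q)" using mass_bound_le[OF \<beta>] by fastforce
    also have "\<dots> \<le> (\<Sum>q'\<in>Qm j. \<gamma> q')" by (rule min_mass_le[OF qQ \<sigma>s_action[OF qQ] \<gamma>])
    finally have "\<beta> * \<beta> ^ j \<le> (\<Sum>q'\<in>Qm j. \<gamma> q') * \<beta> ^ j"
      by (rule mult_right_mono) (use \<beta>01 in simp)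
    then have "\<beta> ^ Suc j \<le> (\<Sum>q'\<in>Qm j. \<gamma> q') * \<beta> ^ j" by simp
    also have "\<dots> \<le> (\<Sum>q'\<in>Qm j. \<gamma> q' * absorbed (kshift q K) q' (Suc j))"
      unfolding sum_distrib_right
      using Suc.IH[OF _ _ K'] Suc.prems(1) nonneg by (intro sum_mono mult_left_mono) auto
    also have "\<dots> \<le> (\<Sum>q'\<in>Q. \<gamma> q' * absorbed (kshift q K) q' (Suc j))"
      using nonneg absorbed_nonneg[OF K'] by (intro sum_mono2[OF finite_Q Qm_subset]) auto
    also have "\<dots> = absorbed K q (Suc (Suc j))" by (simp add: absorbed_Suc[OF qQ] \<gamma>_def)
    finally show ?thesis .
  qed
qed

lemma absorbed_increment:
  assumes \<beta>: "mass_bound \<beta>" and "mod_kernel K" "q \<in> Q"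
  shows "absorbed K q k + \<beta> ^ sat_level * kevent_prob Q K q k (\<lambda>w. last w \<in> Qm sat_level)
    \<le> absorbed K q (k + Suc sat_level)"
  using assms(2,3)
proof (induction k arbitrary: K q)
  case 0
  show ?case
  proof (cases "q \<in> Qm sat_level")
    case True
    then have "q \<noteq> qu" using qu_notin_Qm by blast
    then show ?thesis
      using True absorbed_from_level[OF \<beta> le_refl True 0(1)] 0(2)
      by (simp add: absorbed_0 kevent_prob_0)
  next
    case False
    then show ?thesis using absorbed_mono_le[OF 0, of 0 "Suc sat_level"] 0(2) by (simp add: kevent_prob_0)
  qed
next
  case (Suc k)
  have d: "K [q] \<in> distr Q" by (rule mod_kernel_distr[OF Suc.prems])
  have "absorbed K q (Suc k) + \<beta> ^ sat_level * kevent_prob Q K q (Suc k) (\<lambda>w. last w \<in> Qm sat_level)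
      = (\<Sum>q'\<in>Q. K [q] q' * (absorbed (kshift q K) q' k
          + \<beta> ^ sat_level * kevent_prob Q (kshift q K) q' k (\<lambda>w. last w \<in> Qm sat_level)))"
    unfolding absorbed_Suc[OF Suc.prems(2)] kevent_prob_last_Suc[OF finite_Q Suc.prems(2)]
    by (simp add: distrib_left sum.distrib sum_distrib_left mult.left_commute)
  also have "\<dots> \<le> (\<Sum>q'\<in>Q. K [q] q' * absorbed (kshift q K) q' (k + Suc sat_level))"
    by (rule sum_distr_mono[OF d]) (rule Suc.IH[OF mod_kernel_kshift[OF Suc.prems]])
  also have "\<dots> = absorbed K q (Suc k + Suc sat_level)" by (simp add: absorbed_Suc[OF Suc.prems(2)])
  finally show ?case .
qed

lemma kevent_prob_saturated_LIMSEQ: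
  assumes K: "mod_kernel K" and q: "q \<in> Q"
  shows "(\<lambda>k. kevent_prob Q K q k (\<lambda>w. last w \<in> Qm sat_level)) \<longlonglongrightarrow> 0"
proof -
  obtain \<beta> where \<beta>: "mass_bound \<beta>" using mass_bound_exists by blast
  define \<delta> where "\<delta> = \<beta> ^ sat_level"
  have \<delta>_pos: "0 < \<delta>" using \<beta> by (simp add: \<delta>_def mass_bound_def)
  have bdd: "bdd_above (range (absorbed K q))"
    by (rule bdd_aboveI[where M=1]) (use absorbed_le_1[OF K q] in blast)
  have lim: "absorbed K q \<longlonglongrightarrow> (SUP k. absorbed K q k)"
    by (rule LIMSEQ_incseq_SUP[OF bdd incseq_SucI]) (rule absorbed_mono[OF K q])
  have "(\<lambda>k. (absorbed K q (k + Suc sat_level) - absorbed K q k) / \<delta>)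
      \<longlonglongrightarrow> ((SUP k. absorbed K q k) - (SUP k. absorbed K q k)) / \<delta>"
    by (intro tendsto_divide tendsto_diff LIMSEQ_ignore_initial_segment[OF lim] lim tendsto_const)
      (use \<delta>_pos in simp)
  then have lim0: "(\<lambda>k. (absorbed K q (k + Suc sat_level) - absorbed K q k) / \<delta>) \<longlonglongrightarrow> 0"
    by simp
  have upper: "kevent_prob Q K q k (\<lambda>w. last w \<in> Qm sat_level)
      \<le> (absorbed K q (k + Suc sat_level) - absorbed K q k) / \<delta>" for k
  proof -
    have "kevent_prob Q K q k (\<lambda>w. last w \<in> Qm sat_level) * \<delta>
        \<le> absorbed K q (k + Suc sat_level) - absorbed K q k"
      using absorbed_increment[OF \<beta> K q, of k] by (simp add: \<delta>_def mult.commute)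
    then show ?thesis using \<delta>_pos by (simp add: pos_le_divide_eq)
  qed
  have lower: "0 \<le> kevent_prob Q K q k (\<lambda>w. last w \<in> Qm sat_level)" for k
    using K by (simp add: mod_kernel_def kevent_prob_nonneg)
  show ?thesis
    by (rule real_tendsto_sandwich[OF always_eventually always_eventually tendsto_const lim0])
      (use lower upper in blast)+
qed

theorem stationary_optimal:
  assumes "q \<in> Q"
  shows "(INF \<xi>\<in>Adv. P_reach Q Qs T q (stationary \<sigma>s) \<xi>) = p_opt q"
  using v_stat_eq_p_opt[OF assms]
  by (simp add: P_reach_eq_kreach kreach_stationary strategy_value_def)

theorem stationary_proper:
  assumes "q \<in> Q" "\<xi> \<in> adversaries Q A (\<lambda>q a. if q \<in> T then {dirac qu} else \<Gamma> q a)"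
  shows "(\<lambda>k. prob_at Q (stationary \<sigma>s) \<xi> q k {q \<in> Q. p_opt q > 0}) \<longlonglongrightarrow> 0"
proof (rule real_tendsto_sandwich[OF _ _ tendsto_const])
  have K: "mod_kernel (policy_kernel (stationary \<sigma>s) \<xi>)"
    using assms(2) by (intro mod_kernel_policy_kernel) (simp add: \<Gamma>mod_def[abs_def])
  then show "(\<lambda>k. kevent_prob Q (policy_kernel (stationary \<sigma>s) \<xi>) q k (\<lambda>w. last w \<in> Qm sat_level)) \<longlonglongrightarrow> 0"
    by (rule kevent_prob_saturated_LIMSEQ[OF _ assms(1)])
  show "\<forall>\<^sub>F k in sequentially. 0 \<le> prob_at Q (stationary \<sigma>s) \<xi> q k {q \<in> Q. p_opt q > 0}"
    using K by (simp add: prob_at_eq_kevent_prob kevent_prob_nonneg mod_kernel_def)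
  show "\<forall>\<^sub>F k in sequentially. prob_at Q (stationary \<sigma>s) \<xi> q k {q \<in> Q. p_opt q > 0}
      \<le> kevent_prob Q (policy_kernel (stationary \<sigma>s) \<xi>) q k (\<lambda>w. last w \<in> Qm sat_level)"
    using K p_opt_pos_in_saturated unfolding prob_at_eq_kevent_prob mod_kernel_def
    by (intro always_eventually allI kevent_prob_mono) auto
qed

end

section \<open>The abstraction is a robust MDP\<close>

lemma distr_box_nonempty:
  assumes "finite Q" and lu: "\<And>x. x \<in> Q \<Longrightarrow> 0 \<le> l x \<and> l x \<le> u x"
    and sums: "sum l Q \<le> 1" "1 \<le> sum u Q"
  shows "\<exists>\<gamma>\<in>distr Q. \<forall>x\<in>Q. l x \<le> \<gamma> x \<and> \<gamma> x \<le> u x"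
proof -
  define t where "t = (if sum u Q = sum l Q then 0 else (1 - sum l Q) / (sum u Q - sum l Q))"
  have "sum l Q \<le> sum u Q" using lu by (intro sum_mono) auto
  then have t: "0 \<le> t" "t \<le> 1" using sums by (auto simp: t_def field_simps)
  define \<gamma> where "\<gamma> x = (if x \<in> Q then l x + t * (u x - l x) else 0)" for x
  have "sum \<gamma> Q = sum l Q + t * (sum u Q - sum l Q)"
    by (simp add: \<gamma>_def sum.distrib sum_distrib_left sum_subtractf right_diff_distrib)
  also have "\<dots> = 1" using sums by (auto simp: t_def)
  finally have "sum \<gamma> Q = 1" .
  moreover have "l x \<le> \<gamma> x \<and> \<gamma> x \<le> u x" if "x \<in> Q" for x
    using that lu[OF that] t mult_left_le_one_le[of "u x - l x" t] by (simp add: \<gamma>_def)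
  moreover have "0 \<le> \<gamma> x" for x using lu t by (simp add: \<gamma>_def)
  ultimately show ?thesis by (intro bexI[of _ \<gamma>]) (auto simp: distr_def \<gamma>_def)
qed

lemma set_cost_nonneg: "0 \<le> set_cost s x y" if "x \<noteq> {}" "y \<noteq> {}"
  unfolding set_cost_def using that by (intro cInf_greatest) auto

lemma set_cost_self: "x \<noteq> {} \<Longrightarrow> set_cost s x x = 0"
  unfolding set_cost_def by (rule cInf_eq_minimum) force+

lemma transport_cost_self:
  fixes Q :: "'v::real_normed_vector set set"
  assumes "finite Q" "\<And>x. x \<in> Q \<Longrightarrow> x \<noteq> {}" "\<gamma> \<in> distr Q"
  shows "transport_cost Q (set_cost s) \<gamma> \<gamma> = 0"
  unfolding transport_cost_def
proof (rule cInf_eq_minimum)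
  define \<pi> where "\<pi> x y = (if x = y \<and> x \<in> Q then \<gamma> x else 0)" for x y
  have "\<pi> \<in> couplings Q \<gamma> \<gamma>"
    using assms(1) distr_nonneg[OF assms(3)] by (auto simp: couplings_def \<pi>_def)
  moreover have "(\<Sum>x\<in>Q. \<Sum>y\<in>Q. \<pi> x y * set_cost s x y) = 0"
    by (intro sum.neutral ballI) (simp add: \<pi>_def set_cost_self assms(2))
  ultimately show "0 \<in> {\<Sum>x\<in>Q. \<Sum>y\<in>Q. \<pi> x y * set_cost s x y |\<pi>. \<pi> \<in> couplings Q \<gamma> \<gamma>}"
    by force
  fix c assume "c \<in> {\<Sum>x\<in>Q. \<Sum>y\<in>Q. \<pi> x y * set_cost s x y |\<pi>. \<pi> \<in> couplings Q \<gamma> \<gamma>}"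
  then show "0 \<le> c"
    by (auto simp: couplings_def set_cost_nonneg assms(2) intro!: sum_nonneg mult_nonneg_nonneg)
qed

lemma Gamma_hat_nonempty:
  assumes "finite Q" "\<And>q'. q' \<in> Q \<Longrightarrow> 0 \<le> Pl q a q' \<and> Pl q a q' \<le> Pu q a q'"
    and "(\<Sum>q'\<in>Q. Pl q a q') \<le> 1" "1 \<le> (\<Sum>q'\<in>Q. Pu q a q')"
  shows "Gamma_hat Q Pl Pu q a \<noteq> {}"
  using distr_box_nonempty[OF assms] by (auto simp: Gamma_hat_def)

lemma Gamma_hat_absorbing:
  assumes "finite Q" "q \<in> Q" "Gamma_hat Q Pl Pu q a \<noteq> {}" "Pl q a q = 1"
  shows "Gamma_hat Q Pl Pu q a = {dirac q}"
proof -
  have "\<gamma> = dirac q" if "\<gamma> \<in> Gamma_hat Q Pl Pu q a" for \<gamma>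
    using that assms(2,4) by (intro distr_eq_dirac[OF assms(1,2)]) (auto simp: Gamma_hat_def)
  then show ?thesis using assms(3) by blast
qed

lemma abstraction_robust_mdp:
  fixes Qsafe :: "'v::real_normed_vector set set"
  assumes "finite Qsafe" "\<And>q. q \<in> Qsafe \<Longrightarrow> q \<noteq> {}" "X \<noteq> UNIV" "\<Union>Qsafe = X"
    and "T \<subseteq> Qsafe" "finite A" "A \<noteq> {}"
    and P_range: "\<And>q a q'. q \<in> insert (- X) Qsafe \<Longrightarrow> a \<in> A \<Longrightarrow> q' \<in> insert (- X) Qsafe \<Longrightarrow>
       0 \<le> Pl q a q' \<and> Pl q a q' \<le> Pu q a q'"
    and P_sums: "\<And>q a. q \<in> insert (- X) Qsafe \<Longrightarrow> a \<in> A \<Longrightarrow>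
       (\<Sum>q'\<in>insert (- X) Qsafe. Pl q a q') \<le> 1 \<and> 1 \<le> (\<Sum>q'\<in>insert (- X) Qsafe. Pu q a q')"
    and P_unsafe: "\<And>a. a \<in> A \<Longrightarrow> Pl (- X) a (- X) = 1"
    and "0 \<le> eps"
  shows "robust_mdp (insert (- X) Qsafe) A (Gamma_amb (insert (- X) Qsafe) Qsafe (set_cost s) eps s Pl Pu)
    Qsafe T (- X)"
proof -
  let ?Q = "insert (- X) Qsafe"
  have fin: "finite ?Q" using assms(1) by simp
  have unsafe_ne: "- X \<noteq> {}" using assms(3) by blast
  have unsafe_notin: "- X \<notin> Qsafe" using assms(4) unsafe_ne by blast
  have cells: "x \<noteq> {}" if "x \<in> ?Q" for x using that assms(2) unsafe_ne by auto
  have hat_ne: "Gamma_hat ?Q Pl Pu q a \<noteq> {}" if "q \<in> ?Q" "a \<in> A" for q a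
    using P_range[OF that] P_sums[OF that] by (intro Gamma_hat_nonempty[OF fin]) auto
  have hat_unsafe: "Gamma_hat ?Q Pl Pu (- X) a = {dirac (- X)}" if "a \<in> A" for a
    using hat_ne[OF _ that] P_unsafe[OF that] by (intro Gamma_hat_absorbing[OF fin]) auto
  show ?thesis
  proof
    fix q a assume q: "q \<in> ?Q" and a: "a \<in> A"
    show "Gamma_amb ?Q Qsafe (set_cost s) eps s Pl Pu q a \<noteq> {}"
    proof (cases "q \<in> Qsafe")
      case True
      obtain \<gamma> where \<gamma>: "\<gamma> \<in> Gamma_hat ?Q Pl Pu q a" using hat_ne[OF q a] by blast
      then have "\<gamma> \<in> distr ?Q" by (simp add: Gamma_hat_def)
      then have "transport_cost ?Q (set_cost s) \<gamma> \<gamma> \<le> eps powr s"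
        using transport_cost_self[OF fin cells] by simp
      then show ?thesis using True \<gamma> \<open>\<gamma> \<in> distr ?Q\<close> by (auto simp: Gamma_amb_def)
    qed (use hat_ne[OF q a] in \<open>simp add: Gamma_amb_def\<close>)
    show "Gamma_amb ?Q Qsafe (set_cost s) eps s Pl Pu q a \<subseteq> distr ?Q"
      by (auto simp: Gamma_amb_def Gamma_hat_def)
  next
    fix a assume "a \<in> A"
    then show "Gamma_amb ?Q Qsafe (set_cost s) eps s Pl Pu (- X) a = {dirac (- X)}"
      using hat_unsafe unsafe_notin by (simp add: Gamma_amb_def)
  qed (use assms fin unsafe_notin in auto)
qed

theorem theorem2:
  fixes f :: "nat \<Rightarrow> real^'n \<Rightarrow> real^'n"
    and pv :: "(real^'n) measure"
    and s eps :: real and m :: nat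
    and X Xtgt :: "(real^'n) set"
    and Qsafe :: "(real^'n) set set"
    and Pl Pu :: "(real^'n) set \<Rightarrow> nat \<Rightarrow> (real^'n) set \<Rightarrow> real"
    and \<sigma>s :: "(real^'n) set \<Rightarrow> nat"
  defines "A \<equiv> {1..m}"
    and "qu \<equiv> - X"
    and "Q \<equiv> insert (- X) Qsafe"
    and "Qtgt \<equiv> {q \<in> Qsafe. q \<subseteq> Xtgt}"
    and "\<Gamma> \<equiv> Gamma_amb (insert (- X) Qsafe) Qsafe (set_cost s) eps s Pl Pu"
    and "pinf \<equiv> p_low (insert (- X) Qsafe) {1..m} (Gamma_amb (insert (- X) Qsafe) Qsafe (set_cost s) eps s Pl Pu) Qsafe {q \<in> Qsafe. q \<subseteq> Xtgt}"
    and "Qreach \<equiv> {q\<in>(insert (- X) Qsafe). p_low (insert (- X) Qsafe) {1..m} (Gamma_amb (insert (- X) Qsafe) Qsafe (set_cost s) eps s Pl Pu) Qsafe {q \<in> Qsafe. q \<subseteq> Xtgt} q > 0}"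
    and "Ast \<equiv> opt_actions (insert (- X) Qsafe) {1..m} (Gamma_amb (insert (- X) Qsafe) Qsafe (set_cost s) eps s Pl Pu) (p_low (insert (- X) Qsafe) {1..m} (Gamma_amb (insert (- X) Qsafe) Qsafe (set_cost s) eps s Pl Pu) Qsafe {q \<in> Qsafe. q \<subseteq> Xtgt})"
    and "Qm \<equiv> Qlev (insert (- X) Qsafe) (Gamma_amb (insert (- X) Qsafe) Qsafe (set_cost s) eps s Pl Pu) (opt_actions (insert (- X) Qsafe) {1..m} (Gamma_amb (insert (- X) Qsafe) Qsafe (set_cost s) eps s Pl Pu) (p_low (insert (- X) Qsafe) {1..m} (Gamma_amb (insert (- X) Qsafe) Qsafe (set_cost s) eps s Pl Pu) Qsafe {q \<in> Qsafe. q \<subseteq> Xtgt})) {q \<in> Qsafe. q \<subseteq> Xtgt}"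
    and "mmax \<equiv> (LEAST k. k \<ge> 1 \<and> Qlev (insert (- X) Qsafe) (Gamma_amb (insert (- X) Qsafe) Qsafe (set_cost s) eps s Pl Pu) (opt_actions (insert (- X) Qsafe) {1..m} (Gamma_amb (insert (- X) Qsafe) Qsafe (set_cost s) eps s Pl Pu) (p_low (insert (- X) Qsafe) {1..m} (Gamma_amb (insert (- X) Qsafe) Qsafe (set_cost s) eps s Pl Pu) Qsafe {q \<in> Qsafe. q \<subseteq> Xtgt})) {q \<in> Qsafe. q \<subseteq> Xtgt} k
                  = Qlev (insert (- X) Qsafe) (Gamma_amb (insert (- X) Qsafe) Qsafe (set_cost s) eps s Pl Pu) (opt_actions (insert (- X) Qsafe) {1..m} (Gamma_amb (insert (- X) Qsafe) Qsafe (set_cost s) eps s Pl Pu) (p_low (insert (- X) Qsafe) {1..m} (Gamma_amb (insert (- X) Qsafe) Qsafe (set_cost s) eps s Pl Pu) Qsafe {q \<in> Qsafe. q \<subseteq> Xtgt})) {q \<in> Qsafe. q \<subseteq> Xtgt} (k - 1))"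
  assumes s_ge: "s \<ge> 1" and eps_ge: "eps \<ge> 0" and m_ge: "m \<ge> 1"
    and f_cont: "\<forall>u\<in>A. continuous_on UNIV (f u)"
    and pv_prob: "prob_space pv" and pv_sets: "sets pv = sets borel"
    and pv_moment: "(\<integral>\<^sup>+ v. ennreal (norm v powr s) \<partial>pv) < \<infinity>"
    and X_bdd: "bounded X" and X_borel: "X \<in> sets borel" and Xtgt_sub: "Xtgt \<subseteq> X"
    and Qsafe_fin: "finite Qsafe"
    and Qsafe_cells: "\<forall>q\<in>Qsafe. q \<in> sets borel \<and> q \<noteq> {}"
    and Qsafe_disj: "disjoint Qsafe" and Qsafe_union: "\<Union>Qsafe = X"
    and Qsafe_tgt: "\<forall>q\<in>Qsafe. q \<subseteq> Xtgt \<or> q \<inter> Xtgt = {}"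
    and P_range: "\<forall>q\<in>Q. \<forall>a\<in>A. \<forall>q'\<in>Q. 0 \<le> Pl q a q' \<and> Pl q a q' \<le> Pu q a q' \<and> Pu q a q' \<le> 1"
    and P_sums: "\<forall>q\<in>Q. \<forall>a\<in>A. (\<Sum>q'\<in>Q. Pl q a q') \<le> 1 \<and> 1 \<le> (\<Sum>q'\<in>Q. Pu q a q')"
    and P_sound: "\<forall>q\<in>Qsafe. \<forall>a\<in>A. \<forall>q'\<in>Q.
         Pl q a q' \<le> (INF x\<in>q. trans_prob (f a) pv q' x) \<and> (SUP x\<in>q. trans_prob (f a) pv q' x) \<le> Pu q a q'"
    and P_unsafe: "\<forall>a\<in>A. Pl qu a qu = 1 \<and> Pu qu a qu = 1"
    and \<sigma>s_act: "\<forall>q\<in>Q. \<sigma>s q \<in> A"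
    and \<sigma>s_choice: "\<forall>k\<in>{1..mmax}. \<forall>q \<in> Qm k - Qm (k - 1).
         \<sigma>s q \<in> Ast q \<and> (INF \<gamma>\<in>\<Gamma> q (\<sigma>s q). \<Sum>q'\<in>Qm (k - 1). \<gamma> q') > 0"
  shows "(\<forall>q\<in>Q. (INF \<xi>\<in>adversaries Q A \<Gamma>. P_reach Q Qsafe Qtgt q (stationary \<sigma>s) \<xi>)
                = pinf q)
       \<and> (\<forall>q\<in>Q. \<forall>\<xi>\<in>adversaries Q A (\<lambda>q a. if q \<in> Qtgt then {dirac qu} else \<Gamma> q a).
            (\<lambda>k. prob_at Q (stationary \<sigma>s) \<xi> q k Qreach)
              \<longlonglongrightarrow> 0)"
proof -
  note defs = A_def qu_def Q_def Qtgt_def \<Gamma>_def pinf_def Qreach_def Ast_def Qm_def mmax_def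
  interpret robust_mdp "insert (- X) Qsafe" "{1..m}"
      "Gamma_amb (insert (- X) Qsafe) Qsafe (set_cost s) eps s Pl Pu" Qsafe "{q \<in> Qsafe. q \<subseteq> Xtgt}" "- X"
    using Qsafe_fin Qsafe_cells Qsafe_union X_bdd m_ge eps_ge P_range P_sums P_unsafe
    unfolding defs by (intro abstraction_robust_mdp) auto
  interpret level_strategy "insert (- X) Qsafe" "{1..m}"
      "Gamma_amb (insert (- X) Qsafe) Qsafe (set_cost s) eps s Pl Pu" Qsafe "{q \<in> Qsafe. q \<subseteq> Xtgt}" "- X" \<sigma>s
    using \<sigma>s_act \<sigma>s_choice unfolding defs by unfold_locales auto
  show ?thesis
    unfolding defs using stationary_optimal stationary_proper by blast
qed

end
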